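(* Let $\mathbb{P}=\{\pm p: p\text{ prime}\}$ and, for an integer $d\ge1$, let $\mathbb{P}_d=\{p,\ p+d : p\in\mathbb{P},\ p+d\in\mathbb{P}\}$. Counting autocorrelations are taken with respect to $([-n,n])_n$ or its subsequences. (a) If $\mathbb{P}_d$ is nonempty and finite, then the counting autocorrelation of $\mathbb{P}_d$ exists with respect to $([-n,n])_n$ and \[\gamma_{\mathrm{count}}=\frac{1}{\mathrm{card}(\mathbb{P}_d)}\sum_{p,q\in\mathbb{P}_d}\delta_{p-q}\neq\delta_0,\qquad \widehat{\gamma_{\mathrm{count}}}=\frac{1}{\mathrm{card}(\mathbb{P}_d)}\sum_{p,q\in\mathbb{P}_d}e^{2\pi i(p-q)x}\neq\lambda.\] Moreover $\gamma_{\mathrm{count}}(\{d\})\ge\frac12$, with equality if and only if there is no $p$ such that $p,p+d,p+2d$ are all in $\mathbb{P}$. (b) If $\mathbb{P}_d$ is infinite and $3\nmid d$, and $\gamma_{\mathrm{count}}$ is the counting autocorrelation of $\mathbb{P}_d$ with respect to a subsequence of $([-n,n])_n$, then $\gamma_{\mathrm{count}}(\{d\})=\frac12$ and $\widehat{\gamma_{\mathrm{count}}}\neq\lambda$.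
   Context: For finite $F\subseteq\mathbb{R}$, $\gamma_F=\frac{1}{\mathrm{card}(F)}\sum_{x,y\in F}\delta_{x-y}$ if $F\ne\emptyset$, $\gamma_\emptyset=0$. The counting autocorrelation of a locally finite $X$ with respect to $(A_n)_n$ is the vague limit of $\gamma_{X\cap A_n}$ (convergence on compactly supported continuous functions); its Fourier transform is the counting diffraction. $\lambda$ denotes Lebesgue measure. *)

theory Defs
  imports "HOL-Analysis.Analysis" "HOL-Computational_Algebra.Primes"
begin

definition has_compact_support :: "(real \<Rightarrow> 'a::zero) \<Rightarrow> bool" where
  "has_compact_support f \<longleftrightarrow> compact (closure {x. f x \<noteq> 0})"

definition radon_measure :: "real measure \<Rightarrow> bool" where
  "radon_measure \<mu> \<longleftrightarrow> sets \<mu> = sets borel \<and>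
     (\<forall>K. compact K \<longrightarrow> emeasure \<mu> K < \<infinity>)"

text \<open>gamma_F = (1/card F) * sum over x,y in F of delta_(x-y); gamma_{} = 0.\<close>
definition gammaF :: "real set \<Rightarrow> real measure" where
  "gammaF F = (if F = {} then null_measure borel
     else scale_measure (ennreal (1 / real (card F)))
            (distr (count_space (F \<times> F)) borel (\<lambda>(x, y). x - y)))"

definition vague_lim :: "(nat \<Rightarrow> real measure) \<Rightarrow> real measure \<Rightarrow> bool" where
  "vague_lim \<mu> \<nu> \<longleftrightarrow> radon_measure \<nu> \<and>
     (\<forall>f :: real \<Rightarrow> real. continuous_on UNIV f \<and> has_compact_support f \<longrightarrow>
        (\<lambda>n. integral\<^sup>L (\<mu> n) f) \<longlonglongrightarrow> integral\<^sup>L \<nu> f)"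

definition count_autocorr :: "real set \<Rightarrow> (nat \<Rightarrow> real set) \<Rightarrow> real measure \<Rightarrow> bool" where
  "count_autocorr X A \<gamma> \<longleftrightarrow> vague_lim (\<lambda>n. gammaF (X \<inter> A n)) \<gamma>"

definition inv_fourier :: "(real \<Rightarrow> complex) \<Rightarrow> real \<Rightarrow> complex" where
  "inv_fourier f x = (\<integral>t. f t * exp (2 * pi * \<i> * complex_of_real (t * x)) \<partial>lborel)"

text \<open>f * f~ where f~(x) = conj (f (-x)).\<close>
definition conv_tilde :: "(real \<Rightarrow> complex) \<Rightarrow> real \<Rightarrow> complex" where
  "conv_tilde f x = (\<integral>t. f t * cnj (f (t - x)) \<partial>lborel)"

text \<open>omega is the Fourier transform of the (positive definite) measure gamma
  (Berg--Forst): for all f in C_c(R), int (f * f~) d gamma = int |f-check|^2 d omega.\<close>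
definition is_fourier_transform :: "real measure \<Rightarrow> real measure \<Rightarrow> bool" where
  "is_fourier_transform \<gamma> \<omega> \<longleftrightarrow> radon_measure \<omega> \<and>
     (\<forall>f :: real \<Rightarrow> complex. continuous_on UNIV f \<and> has_compact_support f \<longrightarrow>
        integrable \<omega> (\<lambda>x. (cmod (inv_fourier f x))\<^sup>2) \<and>
        integrable \<gamma> (conv_tilde f) \<and>
        (\<integral>x. conv_tilde f x \<partial>\<gamma>) = complex_of_real (\<integral>x. (cmod (inv_fourier f x))\<^sup>2 \<partial>\<omega>))"

definition dirac :: "real \<Rightarrow> real measure" where
  "dirac a = measure_of UNIV (sets borel) (\<lambda>A. indicator A a)"

definition signed_primes :: "real set" where
  "signed_primes = {x. \<exists>p::nat. prime p \<and> (x = real p \<or> x = - real p)}"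

definition prime_pairs :: "nat \<Rightarrow> real set" where
  "prime_pairs d = {x. \<exists>p \<in> signed_primes. p + real d \<in> signed_primes \<and>
                       (x = p \<or> x = p + real d)}"

end

(*
  The autocorrelation gammaF F of a finite set F gives mass diff_count F a / card F to the
  point a, and its Fourier transform has the density |sum_{p in F} e(p x)|^2 / card F; the
  latter rests on the inversion formula int |f-check|^2 e(-a x) dx = (f * f~)(a), proved by
  damping with Gaussians.

  Each element of P_d has a partner at distance d, so counting pairs with difference d gives
  2 N_d = card F + #(centres of d-triples) - #(elements without partner in F). For finite P_d
  the last term vanishes, whence gamma{d} >= 1/2 with equality iff there is no triple. If
  3 does not divide d, one member of a triple is +-3, so there are finitely many triples,
  and the unpartnered points of P_d within [-R, R] lie within d of the boundary; hence the
  mass at d of the truncated autocorrelations tends to 1/2, and narrow tents around d carry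
  this over to the vague limit.

  Lebesgue measure is never the Fourier transform: testing with the autocorrelation G of a
  tent, Plancherel would force int G d gamma = G 0, while the mass at d adds gamma{d} G d > 0.
*)
theory Submission
  imports Defs "HOL-Probability.Characteristic_Functions"
begin

abbreviation e2pi :: "real \<Rightarrow> complex" where
  "e2pi u \<equiv> exp (2 * pi * \<i> * complex_of_real u)"

abbreviation gaussian :: "real \<Rightarrow> real \<Rightarrow> real" where
  "gaussian s x \<equiv> exp (- (pi * (s * x)\<^sup>2))"

lemma norm_e2pi [simp]: "norm (e2pi u) = 1"
  by (simp add: norm_exp_eq_Re)

lemma e2pi_add: "e2pi a * e2pi b = e2pi (a + b)"
  by (simp add: exp_add[symmetric] distrib_left)

lemma cnj_e2pi: "cnj (e2pi a) = e2pi (- a)"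
  by (simp add: exp_cnj)

lemma e2pi_diff_mult: "e2pi ((a - b) * x) = e2pi (a * x) * cnj (e2pi (b * x))"
proof -
  have "(a - b) * x = a * x + - (b * x)" by (simp add: algebra_simps)
  then show ?thesis by (simp only: e2pi_add cnj_e2pi)
qed

lemma borel_measurable_continuous_on_lborel:
  fixes f :: "real \<Rightarrow> 'b::{banach, second_countable_topology}"
  assumes "continuous_on UNIV f"
  shows "f \<in> borel_measurable lborel"
  using assms by (simp add: borel_measurable_continuous_onI)

lemma borel_measurable_continuous_on_lborel_pair:
  fixes F :: "real \<times> real \<Rightarrow> 'b::{banach, second_countable_topology}"
  assumes "continuous_on UNIV F"
  shows "F \<in> borel_measurable (lborel \<Otimes>\<^sub>M lborel)"
  using assms unfolding lborel_prod by (simp add: borel_measurable_continuous_onI)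

section \<open>Compactly supported functions\<close>

lemma has_compact_support_iff_bounded: "has_compact_support f \<longleftrightarrow> bounded {x. f x \<noteq> 0}"
  unfolding has_compact_support_def by simp

lemma has_compact_supportI:
  assumes "\<And>x. f x \<noteq> 0 \<Longrightarrow> \<bar>x\<bar> \<le> L"
  shows "has_compact_support f"
  unfolding has_compact_support_iff_bounded bounded_iff using assms by auto

lemma has_compact_supportE:
  assumes "has_compact_support f"
  obtains L :: real where "\<And>x. f x \<noteq> 0 \<Longrightarrow> \<bar>x\<bar> \<le> L"
  using assms unfolding has_compact_support_iff_bounded bounded_iff by auto

lemma compact_support_boundedE:
  fixes f :: "real \<Rightarrow> 'b::real_normed_vector"
  assumes c: "continuous_on UNIV f" and "has_compact_support f"
  obtains M where "M > 0" "\<And>x. norm (f x) \<le> M"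
proof -
  obtain L where L: "\<And>x. f x \<noteq> 0 \<Longrightarrow> \<bar>x\<bar> \<le> L" using has_compact_supportE assms(2) by blast
  have "compact (f ` {-L..L})"
    by (rule compact_continuous_image) (use c continuous_on_subset in auto)
  then obtain B where B: "\<forall>y\<in>f ` {-L..L}. norm y \<le> B"
    using compact_imp_bounded bounded_iff by metis
  show ?thesis
  proof (rule that[of "max B 1"])
    fix x show "norm (f x) \<le> max B 1"
    proof (cases "f x = 0")
      case False
      then have "x \<in> {-L..L}" using L[of x] by (auto simp: abs_le_iff)
      then show ?thesis using B by force
    qed simp
  qed simp
qed

lemma integrable_lborel_compact_support:
  fixes f :: "real \<Rightarrow> 'b::{banach, second_countable_topology}"
  assumes c: "continuous_on UNIV f" and "has_compact_support f"
  shows "integrable lborel f"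
proof -
  obtain L where L: "\<And>x. f x \<noteq> 0 \<Longrightarrow> \<bar>x\<bar> \<le> L" using has_compact_supportE assms(2) by blast
  have "integrable lborel (\<lambda>x. indicator {-L..L} x *\<^sub>R f x)"
    by (rule borel_integrable_compact) (use c continuous_on_subset in auto)
  also have "(\<lambda>x. indicator {-L..L} x *\<^sub>R f x) = f"
  proof
    fix x show "indicator {-L..L} x *\<^sub>R f x = f x"
      using L[of x] by (cases "f x = 0") (auto simp: indicator_def abs_le_iff)
  qed
  finally show ?thesis .
qed

lemma continuous_on_lborel_integral:
  fixes K :: "real \<Rightarrow> real \<Rightarrow> 'b::{banach, second_countable_topology}"
  assumes "\<And>x. K x \<in> borel_measurable lborel"
    and c: "\<And>t. continuous_on UNIV (\<lambda>x. K x t)"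
    and "integrable lborel B" and "\<And>x t. norm (K x t) \<le> B t"
  shows "continuous_on UNIV (\<lambda>x. \<integral>t. K x t \<partial>lborel)"
proof -
  have "continuous (at x) (\<lambda>x. \<integral>t. K x t \<partial>lborel)" for x
  proof (rule continuous_at_sequentiallyI)
    fix X assume X: "X \<longlonglongrightarrow> x"
    show "(\<lambda>n. \<integral>t. K (X n) t \<partial>lborel) \<longlonglongrightarrow> \<integral>t. K x t \<partial>lborel"
    proof (rule integral_dominated_convergence[where w=B])
      show "AE t in lborel. (\<lambda>n. K (X n) t) \<longlonglongrightarrow> K x t"
      proof (rule AE_I2)
        fix t
        have "isCont (\<lambda>x. K x t) x" using c[of t] continuous_on_eq_continuous_at by blast
        then show "(\<lambda>n. K (X n) t) \<longlonglongrightarrow> K x t" using X isCont_tendsto_compose by blast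
      qed
    qed (use assms in auto)
  qed
  then show ?thesis by (simp add: continuous_at_imp_continuous_on)
qed

lemma integrable_pair_lborel_bound:
  fixes F :: "real \<times> real \<Rightarrow> 'b::{banach, second_countable_topology}"
  assumes u: "integrable lborel u" and v: "integrable lborel v"
    and m: "F \<in> borel_measurable (lborel \<Otimes>\<^sub>M lborel)"
    and bd: "\<And>x y. norm (F (x, y)) \<le> u x * v y"
  shows "integrable (lborel \<Otimes>\<^sub>M lborel) F"
proof (rule Bochner_Integration.integrable_bound[OF _ m])
  have [measurable]: "u \<in> borel_measurable borel" "v \<in> borel_measurable borel"
    using u v by auto
  show "integrable (lborel \<Otimes>\<^sub>M lborel) (\<lambda>(x, y). norm (u x) * norm (v y))"
  proof (subst integrable_iff_bounded, safe)
    show "(\<lambda>(x, y). norm (u x) * norm (v y)) \<in> borel_measurable (lborel \<Otimes>\<^sub>M lborel)"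
      by measurable
    have "(\<integral>\<^sup>+ z. ennreal (norm ((\<lambda>(x, y). norm (u x) * norm (v y)) z)) \<partial>(lborel \<Otimes>\<^sub>M lborel))
        = (\<integral>\<^sup>+ x. \<integral>\<^sup>+ y. ennreal (norm (u x)) * ennreal (norm (v y)) \<partial>lborel \<partial>lborel)"
      by (subst lborel.nn_integral_fst[symmetric]) (auto simp: ennreal_mult)
    also have "\<dots> = (\<integral>\<^sup>+ x. ennreal (norm (u x)) \<partial>lborel) * (\<integral>\<^sup>+ y. ennreal (norm (v y)) \<partial>lborel)"
      by (simp add: nn_integral_cmult nn_integral_multc)
    also have "\<dots> < \<infinity>"
      using u v unfolding integrable_iff_bounded by (simp add: ennreal_mult_less_top)
    finally show "(\<integral>\<^sup>+ z. ennreal (norm ((\<lambda>(x, y). norm (u x) * norm (v y)) z)) \<partial>(lborel \<Otimes>\<^sub>M lborel)) < \<infinity>" .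
  qed
  show "AE z in lborel \<Otimes>\<^sub>M lborel. norm (F z) \<le> norm ((\<lambda>(x, y). norm (u x) * norm (v y)) z)"
  proof (rule AE_I2)
    fix z :: "real \<times> real"
    obtain x y where z: "z = (x, y)" by (cases z)
    have "norm (F (x, y)) \<le> \<bar>u x * v y\<bar>" using bd[of x y] by linarith
    then show "norm (F z) \<le> norm ((\<lambda>(x, y). norm (u x) * norm (v y)) z)" by (simp add: z abs_mult)
  qed
qed

section \<open>Fourier inversion for autocorrelations of test functions\<close>

lemma integrable_gaussian:
  assumes "s \<noteq> 0"
  shows "integrable lborel (gaussian s)"
proof -
  define c where "c = sqrt (2 * pi) * s"
  have "c \<noteq> 0" unfolding c_def using assms by simp
  then have "integrable lborel (\<lambda>x. sqrt (2 * pi) * std_normal_density (0 + c * x))"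
    by (intro integrable_mult_right lborel_integrable_real_affine[OF integrable_normal_density]) simp
  also have "(\<lambda>x. sqrt (2 * pi) * std_normal_density (0 + c * x)) = gaussian s"
    unfolding c_def normal_density_def by (simp add: power_mult_distrib)
  finally show ?thesis .
qed

lemma lborel_integral_e2pi_gaussian:
  assumes s: "s > 0"
  shows "(\<integral>x. e2pi (u * x) * complex_of_real (gaussian s x) \<partial>lborel)
       = complex_of_real (exp (- (pi * (u / s)\<^sup>2)) / s)"
proof -
  define c where "c = sqrt (2 * pi) * s"
  define t where "t = 2 * pi * u / c"
  have c0: "c > 0" unfolding c_def using s by simp
  have sq: "(sqrt (2 * pi))\<^sup>2 = 2 * pi" by simp
  have [measurable]: "(\<lambda>y. iexp (t * y)) \<in> borel_measurable lborel"
    by (intro borel_measurable_continuous_on_lborel continuous_intros)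
  have integrand: "std_normal_density (0 + c * x) *\<^sub>R iexp (t * (0 + c * x))
      = (1 / sqrt (2 * pi)) *\<^sub>R (e2pi (u * x) * complex_of_real (gaussian s x))" for x
  proof -
    have "(c * x)\<^sup>2 / 2 = pi * (s * x)\<^sup>2"
      unfolding c_def by (simp add: power_mult_distrib sq)
    moreover have "iexp (t * (0 + c * x)) = e2pi (u * x)"
      unfolding t_def using c0 by (simp add: field_simps)
    ultimately show ?thesis
      by (simp add: normal_density_def scaleR_conv_of_real mult_ac)
  qed
  have "complex_of_real (exp (- (t\<^sup>2) / 2)) = char std_normal_distribution t"
    by (simp add: char_std_normal_distribution)
  also have "\<dots> = (\<integral>y. std_normal_density y *\<^sub>R iexp (t * y) \<partial>lborel)"
    unfolding char_def by (subst integral_density) auto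
  also have "\<dots> = \<bar>c\<bar> *\<^sub>R (\<integral>x. std_normal_density (0 + c * x) *\<^sub>R iexp (t * (0 + c * x)) \<partial>lborel)"
    by (rule lborel_integral_real_affine) (use c0 in simp)
  also have "\<dots> = c *\<^sub>R (\<integral>x. (1 / sqrt (2 * pi)) *\<^sub>R (e2pi (u * x) * complex_of_real (gaussian s x)) \<partial>lborel)"
    unfolding integrand using c0 by simp
  also have "\<dots> = s *\<^sub>R (\<integral>x. e2pi (u * x) * complex_of_real (gaussian s x) \<partial>lborel)"
    unfolding integral_scaleR_right scaleR_scaleR c_def by simp
  finally have *: "complex_of_real (exp (- (t\<^sup>2) / 2))
      = s *\<^sub>R (\<integral>x. e2pi (u * x) * complex_of_real (gaussian s x) \<partial>lborel)" .
  have "t\<^sup>2 / 2 = pi * (u / s)\<^sup>2"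
    unfolding t_def c_def using s
    by (simp add: power_divide power_mult_distrib sq field_simps power2_eq_square)
  then have "(\<integral>x. e2pi (u * x) * complex_of_real (gaussian s x) \<partial>lborel)
      = (1 / s) *\<^sub>R complex_of_real (exp (- (pi * (u / s)\<^sup>2)))"
    using * s by (simp add: minus_divide_left)
  then show ?thesis by (simp add: scaleR_conv_of_real)
qed

lemma lborel_integral_standard_gaussian: "(\<integral>z. complex_of_real (exp (- (pi * z\<^sup>2))) \<partial>lborel) = 1"
  using lborel_integral_e2pi_gaussian[of 1 0] by simp

lemma lborel_integral_rescale_gaussian:
  fixes G :: "real \<Rightarrow> complex"
  assumes s: "s > 0"
  shows "(\<integral>y. G y * complex_of_real (exp (- (pi * ((y - a) / s)\<^sup>2)) / s) \<partial>lborel)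
       = (\<integral>z. G (a + s * z) * complex_of_real (exp (- (pi * z\<^sup>2))) \<partial>lborel)"
proof -
  have "(\<integral>y. G y * complex_of_real (exp (- (pi * ((y - a) / s)\<^sup>2)) / s) \<partial>lborel)
      = \<bar>s\<bar> *\<^sub>R (\<integral>z. G (a + s * z) * complex_of_real (exp (- (pi * ((a + s * z - a) / s)\<^sup>2)) / s) \<partial>lborel)"
    by (rule lborel_integral_real_affine) (use s in simp)
  also have "\<dots> = s *\<^sub>R (\<integral>z. (1 / s) *\<^sub>R (G (a + s * z) * complex_of_real (exp (- (pi * z\<^sup>2)))) \<partial>lborel)"
    using s by (simp add: scaleR_conv_of_real mult_ac)
  finally show ?thesis
    using s by simp
qed

lemma gaussian_mollifier_tendsto:
  fixes G :: "real \<Rightarrow> complex"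
  assumes cont: "continuous_on UNIV G" and B: "\<And>y. norm (G y) \<le> B"
  shows "(\<lambda>k. \<integral>z. G (a + inverse (real (Suc k)) * z) * complex_of_real (exp (- (pi * z\<^sup>2))) \<partial>lborel)
           \<longlonglongrightarrow> G a"
proof -
  have "(\<lambda>k. \<integral>z. G (a + inverse (real (Suc k)) * z) * complex_of_real (exp (- (pi * z\<^sup>2))) \<partial>lborel)
      \<longlonglongrightarrow> (\<integral>z. G a * complex_of_real (exp (- (pi * z\<^sup>2))) \<partial>lborel)"
  proof (rule integral_dominated_convergence[where w="\<lambda>z. B * exp (- (pi * z\<^sup>2))"])
    show "integrable lborel (\<lambda>z. B * exp (- (pi * z\<^sup>2)))"
      using integrable_gaussian[of 1] by simp
    show "(\<lambda>z. G a * complex_of_real (exp (- (pi * z\<^sup>2)))) \<in> borel_measurable lborel"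
      by (intro borel_measurable_continuous_on_lborel continuous_intros)
    show "(\<lambda>z. G (a + inverse (real (Suc k)) * z) * complex_of_real (exp (- (pi * z\<^sup>2))))
        \<in> borel_measurable lborel" for k
      by (intro borel_measurable_continuous_on_lborel continuous_intros continuous_on_compose2[OF cont]) auto
    show "AE z in lborel. norm (G (a + inverse (real (Suc k)) * z) * complex_of_real (exp (- (pi * z\<^sup>2))))
        \<le> B * exp (- (pi * z\<^sup>2))" for k
      using B by (intro AE_I2) (simp add: norm_mult mult_right_mono)
    show "AE z in lborel. (\<lambda>k. G (a + inverse (real (Suc k)) * z) * complex_of_real (exp (- (pi * z\<^sup>2))))
        \<longlonglongrightarrow> G a * complex_of_real (exp (- (pi * z\<^sup>2)))"
    proof (rule AE_I2)
      fix z
      have "(\<lambda>k. a + inverse (real (Suc k)) * z) \<longlonglongrightarrow> a + 0 * z"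
        by (intro tendsto_intros LIMSEQ_inverse_real_of_nat)
      moreover have "isCont G a" using cont continuous_on_eq_continuous_at by blast
      ultimately have "(\<lambda>k. G (a + inverse (real (Suc k)) * z)) \<longlonglongrightarrow> G a"
        using isCont_tendsto_compose by force
      then show "(\<lambda>k. G (a + inverse (real (Suc k)) * z) * complex_of_real (exp (- (pi * z\<^sup>2))))
          \<longlonglongrightarrow> G a * complex_of_real (exp (- (pi * z\<^sup>2)))"
        by (intro tendsto_intros)
    qed
  qed
  then show ?thesis
    by (simp only: integral_mult_right_zero lborel_integral_standard_gaussian mult_1_right)
qed

lemma conv_tilde_eq_0:
  assumes L: "\<And>x. f x \<noteq> 0 \<Longrightarrow> \<bar>x\<bar> \<le> L" and y: "\<bar>y\<bar> > 2 * L"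
  shows "conv_tilde f y = 0"
proof -
  have "f t * cnj (f (t - y)) = 0" for t
  proof (cases "f t = 0")
    case False
    then have "\<bar>t - y\<bar> > L" using L[of t] y by auto
    then show ?thesis using L[of "t - y"] by force
  qed simp
  then have "(\<lambda>t. f t * cnj (f (t - y))) = (\<lambda>_. 0)" by auto
  then show ?thesis unfolding conv_tilde_def by simp
qed

lemma has_compact_support_conv_tilde:
  assumes "has_compact_support f"
  shows "has_compact_support (conv_tilde f)"
proof -
  obtain L where "\<And>x. f x \<noteq> 0 \<Longrightarrow> \<bar>x\<bar> \<le> L" using has_compact_supportE assms by blast
  then show ?thesis
    by (intro has_compact_supportI[of _ "2 * L"]) (metis conv_tilde_eq_0 not_le)
qed

lemma norm_inv_fourier_le: "norm (inv_fourier f x) \<le> (\<integral>t. norm (f t) \<partial>lborel)"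
proof -
  have "norm (inv_fourier f x) \<le> (\<integral>t. norm (f t * e2pi (t * x)) \<partial>lborel)"
    unfolding inv_fourier_def by (rule integral_norm_bound)
  then show ?thesis by (simp add: norm_mult)
qed

lemma lborel_integral_cnj_reflect_e2pi:
  "(\<integral>y. cnj (f (t - y)) * e2pi (y * x) \<partial>lborel) = e2pi (t * x) * cnj (inv_fourier f x)"
proof -
  have "(\<integral>y. cnj (f (t - y)) * e2pi (y * x) \<partial>lborel)
      = \<bar>-1\<bar> *\<^sub>R (\<integral>s. cnj (f (t - (t + -1 * s))) * e2pi ((t + -1 * s) * x) \<partial>lborel)"
    by (rule lborel_integral_real_affine) simp
  also have "\<dots> = (\<integral>s. e2pi (t * x) * cnj (f s * e2pi (s * x)) \<partial>lborel)"
  proof -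
    have "t + -1 * s = t - s" for s by simp
    then show ?thesis by (simp only: e2pi_diff_mult) (simp add: mult_ac)
  qed
  also have "\<dots> = e2pi (t * x) * cnj (inv_fourier f x)"
    unfolding inv_fourier_def by (simp only: integral_mult_right_zero Bochner_Integration.integral_cnj)
  finally show ?thesis .
qed

context
  fixes f :: "real \<Rightarrow> complex"
  assumes cont: "continuous_on UNIV f" and supp: "has_compact_support f"
begin

lemma continuous_on_conv_tilde: "continuous_on UNIV (conv_tilde f)"
proof -
  obtain M where M: "\<And>x. norm (f x) \<le> M" using compact_support_boundedE[OF cont supp] by blast
  have "continuous_on UNIV (\<lambda>x. \<integral>t. f t * cnj (f (t - x)) \<partial>lborel)"
  proof (rule continuous_on_lborel_integral[where B="\<lambda>t. norm (f t) * M"])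
    show "integrable lborel (\<lambda>t. norm (f t) * M)"
      using integrable_lborel_compact_support[OF cont supp] by auto
    show "norm (f t * cnj (f (t - x))) \<le> norm (f t) * M" for x t
      using M by (simp add: norm_mult mult_left_mono)
    show "continuous_on UNIV (\<lambda>x. f t * cnj (f (t - x)))" for t
      by (intro continuous_intros continuous_on_compose2[OF cont]) auto
    show "(\<lambda>t. f t * cnj (f (t - x))) \<in> borel_measurable lborel" for x
      by (intro borel_measurable_continuous_on_lborel continuous_intros continuous_on_compose2[OF cont]) auto
  qed
  then show ?thesis unfolding conv_tilde_def[abs_def] .
qed

lemma continuous_on_inv_fourier: "continuous_on UNIV (inv_fourier f)"
proof -
  have "continuous_on UNIV (\<lambda>x. \<integral>t. f t * e2pi (t * x) \<partial>lborel)"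
  proof (rule continuous_on_lborel_integral[where B="\<lambda>t. norm (f t)"])
    show "integrable lborel (\<lambda>t. norm (f t))"
      using integrable_lborel_compact_support[OF cont supp] by auto
    show "norm (f t * e2pi (t * x)) \<le> norm (f t)" for x t
      by (simp add: norm_mult)
    show "continuous_on UNIV (\<lambda>x. f t * e2pi (t * x))" for t
      by (intro continuous_intros)
    show "(\<lambda>t. f t * e2pi (t * x)) \<in> borel_measurable lborel" for x
      by (intro borel_measurable_continuous_on_lborel continuous_intros cont)
  qed
  then show ?thesis unfolding inv_fourier_def[abs_def] .
qed

lemma inv_fourier_conv_tilde:
  "inv_fourier (conv_tilde f) x = complex_of_real ((cmod (inv_fourier f x))\<^sup>2)"
proof -
  obtain L where L: "\<And>x. f x \<noteq> 0 \<Longrightarrow> \<bar>x\<bar> \<le> L" using has_compact_supportE[OF supp] by blast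
  obtain M where M: "M > 0" "\<And>x. norm (f x) \<le> M" using compact_support_boundedE[OF cont supp] by blast
  define H where "H t y = f t * cnj (f (t - y)) * e2pi (y * x)" for t y
  have int: "integrable (lborel \<Otimes>\<^sub>M lborel) (\<lambda>(t, y). H t y)"
  proof (rule integrable_pair_lborel_bound[where u="\<lambda>t. norm (f t)" and v="\<lambda>y. M * indicator {-2*L..2*L} y"])
    show "integrable lborel (\<lambda>t. norm (f t))" using integrable_lborel_compact_support[OF cont supp] by auto
    show "integrable lborel (\<lambda>y. M * indicator {-2*L..2*L} y)"
      by (intro integrable_mult_right integrable_real_indicator) (auto simp: emeasure_lborel_Icc_eq)
    have "continuous_on UNIV (\<lambda>z::real\<times>real. f (fst z) * cnj (f (fst z - snd z)) * e2pi (snd z * x))"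
      by (intro continuous_intros continuous_on_compose2[OF cont]) auto
    then show "(\<lambda>(t, y). H t y) \<in> borel_measurable (lborel \<Otimes>\<^sub>M lborel)"
      unfolding H_def by (intro borel_measurable_continuous_on_lborel_pair) (simp add: case_prod_beta')
    show "norm ((\<lambda>(t, y). H t y) (t, y)) \<le> norm (f t) * (M * indicator {-2*L..2*L} y)" for t y
    proof (cases "f t = 0 \<or> f (t - y) = 0")
      case True
      then show ?thesis using M(1) by (auto simp: H_def indicator_def)
    next
      case False
      then have "\<bar>t\<bar> \<le> L" "\<bar>t - y\<bar> \<le> L" using L by auto
      then have "y \<in> {-2*L..2*L}" by auto
      then show ?thesis using M(2)[of "t - y"] by (simp add: H_def norm_mult mult_left_mono)
    qed
  qed
  have inner: "(\<integral>y. H t y \<partial>lborel) = f t * e2pi (t * x) * cnj (inv_fourier f x)" for t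
  proof -
    have "(\<integral>y. H t y \<partial>lborel) = f t * (\<integral>y. cnj (f (t - y)) * e2pi (y * x) \<partial>lborel)"
      unfolding H_def by (simp add: integral_mult_right_zero mult.assoc)
    also have "\<dots> = f t * (e2pi (t * x) * cnj (inv_fourier f x))"
      by (simp only: lborel_integral_cnj_reflect_e2pi)
    finally show ?thesis by (simp only: mult.assoc)
  qed
  have "inv_fourier (conv_tilde f) x = (\<integral>y. \<integral>t. H t y \<partial>lborel \<partial>lborel)"
    unfolding inv_fourier_def conv_tilde_def H_def by (simp add: integral_mult_left_zero)
  also have "\<dots> = (\<integral>t. \<integral>y. H t y \<partial>lborel \<partial>lborel)"
    by (rule lborel_pair.Fubini_integral[OF int])
  also have "\<dots> = inv_fourier f x * cnj (inv_fourier f x)"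
    unfolding inner inv_fourier_def by (simp add: integral_mult_left_zero)
  also have "\<dots> = complex_of_real ((cmod (inv_fourier f x))\<^sup>2)"
    by (rule complex_norm_square[symmetric])
  finally show ?thesis .
qed

text \<open>With the Gaussian damping, Fubini applies and the damped integral becomes a Gaussian
  mollification of \<open>conv_tilde f\<close>.\<close>
lemma lborel_integral_sq_inv_fourier_gaussian:
  assumes s: "s > 0"
  shows "(\<integral>x. complex_of_real ((cmod (inv_fourier f x))\<^sup>2) * e2pi (- a * x) * complex_of_real (gaussian s x) \<partial>lborel)
       = (\<integral>y. conv_tilde f y * complex_of_real (exp (- (pi * ((y - a) / s)\<^sup>2)) / s) \<partial>lborel)"
proof -
  let ?g = "conv_tilde f"
  have gc: "continuous_on UNIV ?g" by (rule continuous_on_conv_tilde)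
  have gi: "integrable lborel ?g"
    using gc has_compact_support_conv_tilde[OF supp] by (rule integrable_lborel_compact_support)
  define K where "K x y = ?g y * (e2pi ((y - a) * x) * complex_of_real (gaussian s x))" for x y
  have int: "integrable (lborel \<Otimes>\<^sub>M lborel) (\<lambda>(x, y). K x y)"
  proof (rule integrable_pair_lborel_bound[where u="gaussian s" and v="\<lambda>y. norm (?g y)"])
    show "integrable lborel (gaussian s)" using s by (intro integrable_gaussian) simp
    show "integrable lborel (\<lambda>y. norm (?g y))" using gi by auto
    have "continuous_on UNIV (\<lambda>z::real\<times>real. ?g (snd z) * (e2pi ((snd z - a) * fst z) * complex_of_real (gaussian s (fst z))))"
      by (intro continuous_intros continuous_on_compose2[OF gc]) auto
    then show "(\<lambda>(x, y). K x y) \<in> borel_measurable (lborel \<Otimes>\<^sub>M lborel)"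
      unfolding K_def by (intro borel_measurable_continuous_on_lborel_pair) (simp add: case_prod_beta')
    show "norm ((\<lambda>(x, y). K x y) (x, y)) \<le> gaussian s x * norm (?g y)" for x y
      by (simp add: K_def norm_mult)
  qed
  have "complex_of_real ((cmod (inv_fourier f x))\<^sup>2) * e2pi (- a * x) * complex_of_real (gaussian s x)
      = (\<integral>y. K x y \<partial>lborel)" for x
  proof -
    have e: "e2pi (y * x) * e2pi (- a * x) = e2pi ((y - a) * x)" for y
    proof -
      have "(y - a) * x = y * x + - a * x" by (simp add: algebra_simps)
      then show ?thesis by (simp only: e2pi_add)
    qed
    have "complex_of_real ((cmod (inv_fourier f x))\<^sup>2) * e2pi (- a * x) * complex_of_real (gaussian s x)
        = inv_fourier ?g x * (e2pi (- a * x) * complex_of_real (gaussian s x))"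
      by (simp only: inv_fourier_conv_tilde mult.assoc)
    also have "\<dots> = (\<integral>y. ?g y * e2pi (y * x) * (e2pi (- a * x) * complex_of_real (gaussian s x)) \<partial>lborel)"
      unfolding inv_fourier_def by (rule integral_mult_left_zero[symmetric])
    also have "\<dots> = (\<integral>y. K x y \<partial>lborel)"
      unfolding K_def e[symmetric] by (simp only: mult.assoc)
    finally show ?thesis .
  qed
  then have "(\<integral>x. complex_of_real ((cmod (inv_fourier f x))\<^sup>2) * e2pi (- a * x) * complex_of_real (gaussian s x) \<partial>lborel)
      = (\<integral>x. \<integral>y. K x y \<partial>lborel \<partial>lborel)"
    by simp
  also have "\<dots> = (\<integral>y. \<integral>x. K x y \<partial>lborel \<partial>lborel)"
    by (rule lborel_pair.Fubini_integral[OF int, symmetric])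
  also have "\<dots> = (\<integral>y. ?g y * complex_of_real (exp (- (pi * ((y - a) / s)\<^sup>2)) / s) \<partial>lborel)"
    unfolding K_def integral_mult_right_zero lborel_integral_e2pi_gaussian[OF s] ..
  finally show ?thesis .
qed

lemma gaussian_damped_tendsto:
  "(\<lambda>k. \<integral>x. complex_of_real ((cmod (inv_fourier f x))\<^sup>2) * e2pi (- a * x)
            * complex_of_real (gaussian (inverse (real (Suc k))) x) \<partial>lborel)
     \<longlonglongrightarrow> conv_tilde f a"
proof -
  have gc: "continuous_on UNIV (conv_tilde f)" by (rule continuous_on_conv_tilde)
  obtain B where B: "\<And>y. norm (conv_tilde f y) \<le> B"
    using compact_support_boundedE[OF gc has_compact_support_conv_tilde[OF supp]] by blast
  have s: "inverse (real (Suc k)) > 0" for k by simp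
  show ?thesis
    unfolding lborel_integral_sq_inv_fourier_gaussian[OF s] lborel_integral_rescale_gaussian[OF s]
    by (rule gaussian_mollifier_tendsto[OF gc B])
qed

lemma integrable_sq_inv_fourier: "integrable lborel (\<lambda>x. (cmod (inv_fourier f x))\<^sup>2)"
proof -
  define \<Phi> where "\<Phi> x = (cmod (inv_fourier f x))\<^sup>2" for x
  define sk where "sk k = inverse (real (Suc k))" for k
  define fk where "fk k x = \<Phi> x * gaussian (sk k) x" for k x
  have \<Phi>c: "continuous_on UNIV \<Phi>"
    unfolding \<Phi>_def by (intro continuous_intros continuous_on_inv_fourier)
  define F1 where "F1 = (\<integral>t. norm (f t) \<partial>lborel)"
  have \<Phi>b: "\<Phi> x \<le> F1\<^sup>2" for x
    unfolding \<Phi>_def F1_def using norm_inv_fourier_le[of f x] by (intro power_mono) auto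
  have \<Phi>0: "\<Phi> x \<ge> 0" for x unfolding \<Phi>_def by simp
  show ?thesis
    unfolding \<Phi>_def[symmetric]
  proof (rule integrable_monotone_convergence[where f=fk and x="Re (conv_tilde f 0)"])
    show "integrable lborel (fk k)" for k
    proof (rule Bochner_Integration.integrable_bound[where f="\<lambda>x. F1\<^sup>2 * gaussian (sk k) x"])
      show "integrable lborel (\<lambda>x. F1\<^sup>2 * gaussian (sk k) x)"
        using integrable_gaussian[of "sk k"] by (simp add: sk_def)
      show "fk k \<in> borel_measurable lborel"
        unfolding fk_def by (intro borel_measurable_continuous_on_lborel continuous_intros \<Phi>c)
      show "AE x in lborel. norm (fk k x) \<le> norm (F1\<^sup>2 * gaussian (sk k) x)"
        using \<Phi>b \<Phi>0 by (intro AE_I2) (simp add: fk_def mult_right_mono)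
    qed
    show "AE x in lborel. mono (\<lambda>n. fk n x)"
    proof (rule AE_I2, rule monoI)
      fix x and m n :: nat assume "m \<le> n"
      then have "sk n \<le> sk m" unfolding sk_def by (simp add: le_imp_inverse_le)
      then have "(sk n * x)\<^sup>2 \<le> (sk m * x)\<^sup>2"
        unfolding sk_def by (simp add: power_mult_distrib mult_right_mono power_mono)
      then show "fk m x \<le> fk n x" unfolding fk_def using \<Phi>0[of x] by (simp add: mult_left_mono)
    qed
    show "AE x in lborel. (\<lambda>k. fk k x) \<longlonglongrightarrow> \<Phi> x"
    proof (rule AE_I2)
      fix x
      have "(\<lambda>k. fk k x) \<longlonglongrightarrow> \<Phi> x * exp (- (pi * (0 * x)\<^sup>2))"
        unfolding fk_def sk_def by (intro tendsto_intros LIMSEQ_inverse_real_of_nat)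
      then show "(\<lambda>k. fk k x) \<longlonglongrightarrow> \<Phi> x" by simp
    qed
    have "(\<integral>x. complex_of_real (\<Phi> x) * e2pi (- 0 * x) * complex_of_real (gaussian (sk k) x) \<partial>lborel)
        = complex_of_real (integral\<^sup>L lborel (fk k))" for k
      unfolding fk_def by (simp flip: integral_complex_of_real)
    moreover have "(\<lambda>k. Re (\<integral>x. complex_of_real (\<Phi> x) * e2pi (- 0 * x) * complex_of_real (gaussian (sk k) x) \<partial>lborel))
        \<longlonglongrightarrow> Re (conv_tilde f 0)"
      unfolding \<Phi>_def sk_def by (intro tendsto_intros gaussian_damped_tendsto)
    ultimately show "(\<lambda>k. integral\<^sup>L lborel (fk k)) \<longlonglongrightarrow> Re (conv_tilde f 0)"
      by simp
  qed (use \<Phi>c borel_measurable_continuous_on_lborel in auto)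
qed

theorem fourier_inversion_conv_tilde:
  "(\<integral>x. complex_of_real ((cmod (inv_fourier f x))\<^sup>2) * e2pi (- a * x) \<partial>lborel) = conv_tilde f a"
proof (rule LIMSEQ_unique[OF _ gaussian_damped_tendsto])
  define \<Phi> where "\<Phi> x = (cmod (inv_fourier f x))\<^sup>2" for x
  have \<Phi>0: "\<Phi> x \<ge> 0" for x unfolding \<Phi>_def by simp
  have \<Phi>c: "continuous_on UNIV \<Phi>"
    unfolding \<Phi>_def by (intro continuous_intros continuous_on_inv_fourier)
  show "(\<lambda>k. \<integral>x. complex_of_real ((cmod (inv_fourier f x))\<^sup>2) * e2pi (- a * x)
            * complex_of_real (gaussian (inverse (real (Suc k))) x) \<partial>lborel)
      \<longlonglongrightarrow> (\<integral>x. complex_of_real ((cmod (inv_fourier f x))\<^sup>2) * e2pi (- a * x) \<partial>lborel)"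
    unfolding \<Phi>_def[symmetric]
  proof (rule integral_dominated_convergence[where w=\<Phi>])
    show "integrable lborel \<Phi>" using integrable_sq_inv_fourier unfolding \<Phi>_def .
    show "AE x in lborel. norm (complex_of_real (\<Phi> x) * e2pi (- a * x)
        * complex_of_real (gaussian (inverse (real (Suc k))) x)) \<le> \<Phi> x" for k
      using \<Phi>0 by (intro AE_I2) (simp add: norm_mult mult_left_le)
    show "AE x in lborel. (\<lambda>k. complex_of_real (\<Phi> x) * e2pi (- a * x)
        * complex_of_real (gaussian (inverse (real (Suc k))) x)) \<longlonglongrightarrow> complex_of_real (\<Phi> x) * e2pi (- a * x)"
    proof (rule AE_I2)
      fix x
      have "(\<lambda>k. complex_of_real (\<Phi> x) * e2pi (- a * x) * complex_of_real (gaussian (inverse (real (Suc k))) x))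
          \<longlonglongrightarrow> complex_of_real (\<Phi> x) * e2pi (- a * x) * complex_of_real (exp (- (pi * (0 * x)\<^sup>2)))"
        by (intro tendsto_intros LIMSEQ_inverse_real_of_nat)
      then show "(\<lambda>k. complex_of_real (\<Phi> x) * e2pi (- a * x) * complex_of_real (gaussian (inverse (real (Suc k))) x))
          \<longlonglongrightarrow> complex_of_real (\<Phi> x) * e2pi (- a * x)"
        by simp
    qed
    show "(\<lambda>x. complex_of_real (\<Phi> x) * e2pi (- a * x)) \<in> borel_measurable lborel"
      by (intro borel_measurable_continuous_on_lborel continuous_intros \<Phi>c)
    show "(\<lambda>x. complex_of_real (\<Phi> x) * e2pi (- a * x) * complex_of_real (gaussian (inverse (real (Suc k))) x))
        \<in> borel_measurable lborel" for k
      by (intro borel_measurable_continuous_on_lborel continuous_intros \<Phi>c)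
  qed
qed

corollary plancherel_conv_tilde:
  "complex_of_real (\<integral>x. (cmod (inv_fourier f x))\<^sup>2 \<partial>lborel) = conv_tilde f 0"
  using fourier_inversion_conv_tilde[of 0] by (simp flip: integral_complex_of_real)

lemma conv_tilde_uminus: "conv_tilde f (- a) = cnj (conv_tilde f a)"
proof -
  have "cnj (complex_of_real ((cmod (inv_fourier f x))\<^sup>2) * e2pi (- a * x))
      = complex_of_real ((cmod (inv_fourier f x))\<^sup>2) * e2pi (- (- a) * x)" for x
    by (simp only: complex_cnj_mult complex_cnj_complex_of_real cnj_e2pi) simp
  then show ?thesis
    by (simp only: fourier_inversion_conv_tilde[symmetric] Bochner_Integration.integral_cnj[symmetric])
qed

lemma Re_conv_tilde:
  shows "integrable lborel (\<lambda>x. (cmod (inv_fourier f x))\<^sup>2 * Re (e2pi (a * x)))"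
    and "Re (conv_tilde f a) = (\<integral>x. (cmod (inv_fourier f x))\<^sup>2 * Re (e2pi (a * x)) \<partial>lborel)"
proof -
  have int: "integrable lborel (\<lambda>x. complex_of_real ((cmod (inv_fourier f x))\<^sup>2) * e2pi (- a * x))"
  proof (rule Bochner_Integration.integrable_bound[OF integrable_sq_inv_fourier])
    show "(\<lambda>x. complex_of_real ((cmod (inv_fourier f x))\<^sup>2) * e2pi (- a * x)) \<in> borel_measurable lborel"
      by (intro borel_measurable_continuous_on_lborel continuous_intros continuous_on_inv_fourier)
  qed (simp add: norm_mult norm_power)
  have Re_integrand: "Re (complex_of_real ((cmod (inv_fourier f x))\<^sup>2) * e2pi (- a * x))
      = (cmod (inv_fourier f x))\<^sup>2 * Re (e2pi (a * x))" for x
  proof -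
    have "e2pi (- a * x) = cnj (e2pi (a * x))" by (simp only: cnj_e2pi) simp
    then show ?thesis by simp
  qed
  show "integrable lborel (\<lambda>x. (cmod (inv_fourier f x))\<^sup>2 * Re (e2pi (a * x)))"
    using integrable_bounded_linear[OF bounded_linear_Re int] by (simp only: Re_integrand)
  show "Re (conv_tilde f a) = (\<integral>x. (cmod (inv_fourier f x))\<^sup>2 * Re (e2pi (a * x)) \<partial>lborel)"
    by (simp only: fourier_inversion_conv_tilde[symmetric] integral_Re[OF int, symmetric] Re_integrand)
qed

end

section \<open>Autocorrelations of finite sets and their diffraction\<close>

definition diff_count :: "real set \<Rightarrow> real \<Rightarrow> nat" where
  "diff_count F a = card {(x, y) \<in> F \<times> F. x - y = a}"

lemma diff_count_eq_card_minus:
  assumes "finite F"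
  shows "diff_count F a = card {x \<in> F. x - a \<in> F}"
proof -
  have "bij_betw fst {(x, y) \<in> F \<times> F. x - y = a} {x \<in> F. x - a \<in> F}"
    by (rule bij_betw_byWitness[where f'="\<lambda>x. (x, x - a)"]) auto
  then show ?thesis unfolding diff_count_def by (rule bij_betw_same_card)
qed

lemma diff_count_eq_card_plus:
  assumes "finite F"
  shows "diff_count F a = card {y \<in> F. y + a \<in> F}"
proof -
  have "bij_betw snd {(x, y) \<in> F \<times> F. x - y = a} {y \<in> F. y + a \<in> F}"
    by (rule bij_betw_byWitness[where f'="\<lambda>y. (y + a, y)"]) auto
  then show ?thesis unfolding diff_count_def by (rule bij_betw_same_card)
qed

lemma two_diff_count:
  assumes F: "finite F"
  shows "2 * diff_count F a + card {x \<in> F. x - a \<notin> F \<and> x + a \<notin> F}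
       = card F + card {x \<in> F. x - a \<in> F \<and> x + a \<in> F}"
proof -
  let ?A = "{y \<in> F. y + a \<in> F}" and ?B = "{x \<in> F. x - a \<in> F}"
  let ?lonely = "{x \<in> F. x - a \<notin> F \<and> x + a \<notin> F}"
  have "card ?A + card ?B = card (?A \<union> ?B) + card (?A \<inter> ?B)"
    by (rule card_Un_Int) (use F in auto)
  moreover have "card (?A \<inter> ?B) = card {x \<in> F. x - a \<in> F \<and> x + a \<in> F}"
    by (rule arg_cong[where f=card]) blast
  moreover have "card F = card (?A \<union> ?B) + card ?lonely"
  proof -
    have "card ((?A \<union> ?B) \<union> ?lonely) = card (?A \<union> ?B) + card ?lonely"
      by (rule card_Un_disjoint) (use F in auto)
    moreover have "(?A \<union> ?B) \<union> ?lonely = F" by blast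
    ultimately show ?thesis by simp
  qed
  ultimately show ?thesis
    using diff_count_eq_card_plus[OF F, of a] diff_count_eq_card_minus[OF F, of a] by linarith
qed

lemma sets_gammaF [simp, measurable_cong]: "sets (gammaF F) = sets borel"
  unfolding gammaF_def by simp

lemma gammaF_eq_distr_density:
  assumes "finite F" "F \<noteq> {}"
  shows "gammaF F = distr (density (count_space (F \<times> F)) (\<lambda>_. ennreal (1 / real (card F)))) borel (\<lambda>(x, y). x - y)"
    (is "_ = distr ?M borel ?diff")
proof (rule measure_eqI)
  fix A assume A: "A \<in> sets (gammaF F)"
  have "emeasure (gammaF F) A = ennreal (1 / real (card F)) * emeasure (count_space (F \<times> F)) (?diff -` A \<inter> F \<times> F)"
    unfolding gammaF_def using assms A by (simp add: emeasure_distr)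
  also have "\<dots> = emeasure ?M (?diff -` A \<inter> F \<times> F)"
    by (subst emeasure_density) (auto simp: nn_integral_cmult_indicator)
  also have "\<dots> = emeasure (distr ?M borel ?diff) A"
    using A by (simp add: emeasure_distr)
  finally show "emeasure (gammaF F) A = emeasure (distr ?M borel ?diff) A" .
qed simp

lemma has_bochner_integral_gammaF:
  fixes g :: "real \<Rightarrow> 'b::{banach, second_countable_topology}"
  assumes F: "finite F" and g[measurable]: "g \<in> borel_measurable borel"
  shows "has_bochner_integral (gammaF F) g ((1 / real (card F)) *\<^sub>R (\<Sum>(x, y)\<in>F \<times> F. g (x - y)))"
proof (cases "F = {}")
  case True
  then show ?thesis unfolding gammaF_def by (simp add: has_bochner_integral_zero)
next
  case False
  let ?M = "density (count_space (F \<times> F)) (\<lambda>_. ennreal (1 / real (card F)))"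
  have "integrable ?M (\<lambda>z. g (case z of (x, y) \<Rightarrow> x - y))"
    using F by (auto simp: integrable_density integrable_count_space)
  then have int: "integrable (gammaF F) g"
    unfolding gammaF_eq_distr_density[OF F False] by (subst integrable_distr_eq) auto
  have "integral\<^sup>L (gammaF F) g = (\<integral>z. g (case z of (x, y) \<Rightarrow> x - y) \<partial>?M)"
    unfolding gammaF_eq_distr_density[OF F False] by (simp add: integral_distr)
  also have "\<dots> = (\<integral>z. (1 / real (card F)) *\<^sub>R g (case z of (x, y) \<Rightarrow> x - y) \<partial>count_space (F \<times> F))"
    by (subst integral_density) auto
  also have "\<dots> = (1 / real (card F)) *\<^sub>R (\<Sum>(x, y)\<in>F \<times> F. g (x - y))"
    using F by (simp add: lebesgue_integral_count_space_finite scaleR_sum_right case_prod_beta)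
  finally show ?thesis
    using int by (simp add: has_bochner_integral_iff)
qed

lemma integrable_gammaF:
  fixes g :: "real \<Rightarrow> 'b::{banach, second_countable_topology}"
  assumes "finite F" "g \<in> borel_measurable borel"
  shows "integrable (gammaF F) g"
  using has_bochner_integral_gammaF[OF assms] by (rule integrable.intros)

lemma integral_gammaF:
  fixes g :: "real \<Rightarrow> 'b::{banach, second_countable_topology}"
  assumes "finite F" "g \<in> borel_measurable borel"
  shows "integral\<^sup>L (gammaF F) g = (1 / real (card F)) *\<^sub>R (\<Sum>(x, y)\<in>F \<times> F. g (x - y))"
  using has_bochner_integral_gammaF[OF assms] by (rule has_bochner_integral_integral_eq)

lemma measure_gammaF_singleton:
  assumes F: "finite F"
  shows "measure (gammaF F) {a} = real (diff_count F a) / real (card F)"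
proof -
  have "measure (gammaF F) {a} = integral\<^sup>L (gammaF F) (indicator {a})" by simp
  also have "\<dots> = (\<Sum>(x, y)\<in>F \<times> F. indicator {a} (x - y)) / real (card F)"
    using integral_gammaF[OF F, of "indicator {a} :: real \<Rightarrow> real"] by simp
  also have "(\<Sum>(x, y)\<in>F \<times> F. indicator {a} (x - y) :: real) = real (diff_count F a)"
  proof -
    have "(\<Sum>(x, y)\<in>F \<times> F. indicator {a} (x - y) :: real) = (\<Sum>z\<in>F \<times> F. if fst z - snd z = a then 1 else 0)"
      by (intro sum.cong refl) (auto simp: indicator_def)
    moreover have "{z \<in> F \<times> F. fst z - snd z = a} = {(x, y) \<in> F \<times> F. x - y = a}" by auto
    ultimately show ?thesis
      unfolding diff_count_def using F by (simp add: sum.If_cases Int_def)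
  qed
  finally show ?thesis .
qed

lemma radon_measure_gammaF:
  assumes F: "finite F"
  shows "radon_measure (gammaF F)"
  unfolding radon_measure_def
proof (intro conjI allI impI)
  fix K :: "real set"
  show "emeasure (gammaF F) K < \<infinity>"
  proof (cases "F = {}")
    case False
    have "emeasure (gammaF F) K \<le> emeasure (gammaF F) UNIV"
      by (rule emeasure_mono) auto
    also have "\<dots> = ennreal (1 / real (card F)) * emeasure (count_space (F \<times> F)) (F \<times> F)"
      unfolding gammaF_def using False by (simp add: emeasure_distr)
    also have "\<dots> < \<infinity>" using F by (simp add: ennreal_mult_less_top of_nat_less_top)
    finally show ?thesis .
  qed (simp add: gammaF_def)
qed simp

lemma integral_gammaF_ge_point_mass:
  assumes F: "finite F" "F \<noteq> {}" and G: "\<And>u. G u \<ge> 0" "G \<in> borel_measurable borel" and a: "a \<noteq> 0"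
  shows "integral\<^sup>L (gammaF F) G \<ge> G 0 + measure (gammaF F) {a} * G a"
proof -
  let ?S0 = "{(x, y) \<in> F \<times> F. x - y = 0}" and ?Sa = "{(x, y) \<in> F \<times> F. x - y = a}"
  have N: "real (card F) > 0" using F by (simp add: card_gt_0_iff)
  have fin: "finite ?S0" "finite ?Sa" using F by (auto intro: finite_subset[of _ "F \<times> F"])
  have "real (card F) * G 0 + real (diff_count F a) * G a = (\<Sum>(x, y)\<in>?S0 \<union> ?Sa. G (x - y))"
  proof -
    have "card ?S0 = card F"
      using diff_count_eq_card_minus[OF F(1), of 0] unfolding diff_count_def by simp
    moreover have "(\<Sum>(x, y)\<in>?S0 \<union> ?Sa. G (x - y)) = (\<Sum>(x, y)\<in>?S0. G (x - y)) + (\<Sum>(x, y)\<in>?Sa. G (x - y))"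
      by (rule sum.union_disjoint[OF fin]) (use a in auto)
    moreover have "(\<Sum>(x, y)\<in>?S0. G (x - y)) = (\<Sum>z\<in>?S0. G 0)" "(\<Sum>(x, y)\<in>?Sa. G (x - y)) = (\<Sum>z\<in>?Sa. G a)"
      by (intro sum.cong refl; auto)+
    ultimately show ?thesis unfolding diff_count_def by simp
  qed
  also have "\<dots> \<le> (\<Sum>(x, y)\<in>F \<times> F. G (x - y))"
    by (rule sum_mono2) (use F G in \<open>auto simp: case_prod_beta\<close>)
  finally have "(real (card F) * G 0 + real (diff_count F a) * G a) / real (card F)
      \<le> (\<Sum>(x, y)\<in>F \<times> F. G (x - y)) / real (card F)"
    using N by (intro divide_right_mono) auto
  moreover have "(real (card F) * G 0 + real (diff_count F a) * G a) / real (card F)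
      = G 0 + real (diff_count F a) / real (card F) * G a"
    using N by (simp add: field_simps)
  ultimately show ?thesis
    using integral_gammaF[OF F(1) G(2)] measure_gammaF_singleton[OF F(1), of a] by simp
qed

definition diffraction_density :: "real set \<Rightarrow> real \<Rightarrow> complex" where
  "diffraction_density P x = (1 / of_nat (card P)) *
     (\<Sum>(p, q)\<in>P \<times> P. exp (2 * pi * \<i> * complex_of_real ((p - q) * x)))"

lemma diffraction_density_eq:
  assumes "finite P"
  shows "diffraction_density P x = complex_of_real ((cmod (\<Sum>p\<in>P. e2pi (p * x)))\<^sup>2 / real (card P))"
proof -
  have "(\<Sum>(p, q)\<in>P \<times> P. e2pi ((p - q) * x)) = (\<Sum>p\<in>P. \<Sum>q\<in>P. e2pi (p * x) * cnj (e2pi (q * x)))"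
    by (simp only: e2pi_diff_mult sum.cartesian_product)
  also have "\<dots> = (\<Sum>p\<in>P. e2pi (p * x)) * cnj (\<Sum>q\<in>P. e2pi (q * x))"
    by (simp add: sum_product)
  also have "\<dots> = complex_of_real ((cmod (\<Sum>p\<in>P. e2pi (p * x)))\<^sup>2)"
    by (rule complex_norm_square[symmetric])
  finally show ?thesis unfolding diffraction_density_def by simp
qed

lemma Im_diffraction_density: "finite P \<Longrightarrow> Im (diffraction_density P x) = 0"
  by (simp add: diffraction_density_eq)

lemma Re_diffraction_density_nonneg: "finite P \<Longrightarrow> Re (diffraction_density P x) \<ge> 0"
  by (simp add: diffraction_density_eq)

lemma Re_diffraction_density_le_card:
  assumes "finite P"
  shows "Re (diffraction_density P x) \<le> real (card P)"
proof (cases "P = {}")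
  case False
  then have N: "real (card P) > 0" using assms by (simp add: card_gt_0_iff)
  have "cmod (\<Sum>p\<in>P. e2pi (p * x)) \<le> (\<Sum>p\<in>P. cmod (e2pi (p * x)))" by (rule norm_sum)
  then have "(cmod (\<Sum>p\<in>P. e2pi (p * x)))\<^sup>2 \<le> (real (card P))\<^sup>2"
    by (intro power_mono) auto
  then have "(cmod (\<Sum>p\<in>P. e2pi (p * x)))\<^sup>2 / real (card P) \<le> real (card P)"
    using N by (simp add: power2_eq_square divide_le_eq)
  then show ?thesis using assms by (simp add: diffraction_density_eq)
qed (simp add: diffraction_density_def)

lemma Re_diffraction_density_sum:
  "Re (diffraction_density P x) = (1 / real (card P)) * (\<Sum>(p, q)\<in>P \<times> P. Re (e2pi ((p - q) * x)))"
  unfolding diffraction_density_def by (simp add: case_prod_beta)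

lemma continuous_on_Re_diffraction_density: "continuous_on UNIV (\<lambda>x. Re (diffraction_density P x))"
  unfolding diffraction_density_def case_prod_beta by (intro continuous_intros)

lemma radon_measure_density_bounded:
  assumes h: "h \<in> borel_measurable lborel" and C: "\<And>x. h x \<le> C"
  shows "radon_measure (density lborel (\<lambda>x. ennreal (h x)))"
  unfolding radon_measure_def
proof (intro conjI allI impI)
  fix K :: "real set" assume K: "compact K"
  have Ks: "K \<in> sets lborel" using compact_imp_closed[OF K] by simp
  have "emeasure (density lborel (\<lambda>x. ennreal (h x))) K = (\<integral>\<^sup>+x. ennreal (h x) * indicator K x \<partial>lborel)"
    using h Ks by (subst emeasure_density) auto
  also have "\<dots> \<le> (\<integral>\<^sup>+x. ennreal C * indicator K x \<partial>lborel)"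
    by (intro nn_integral_mono) (auto simp: indicator_def C ennreal_leI)
  also have "\<dots> = ennreal C * emeasure lborel K"
    using Ks by (rule nn_integral_cmult_indicator)
  also have "\<dots> < \<infinity>"
    using emeasure_bounded_finite[OF compact_imp_bounded[OF K]] by (simp add: ennreal_mult_less_top)
  finally show "emeasure (density lborel (\<lambda>x. ennreal (h x))) K < \<infinity>" .
qed simp

lemma Im_sum_conv_tilde_differences:
  assumes "continuous_on UNIV f" "has_compact_support f" "finite P"
  shows "Im (\<Sum>(p, q)\<in>P \<times> P. conv_tilde f (p - q)) = 0"
proof -
  let ?I = "\<lambda>p q. Im (conv_tilde f (p - q))"
  have "(\<Sum>(p, q)\<in>P \<times> P. ?I p q) = (\<Sum>p\<in>P. \<Sum>q\<in>P. ?I p q)"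
    by (rule sum.cartesian_product[symmetric])
  also have "\<dots> = (\<Sum>q\<in>P. \<Sum>p\<in>P. ?I p q)"
    by (rule sum.swap)
  also have "\<dots> = (\<Sum>q\<in>P. \<Sum>p\<in>P. - ?I q p)"
  proof (intro sum.cong refl)
    fix p q
    show "?I p q = - ?I q p"
      using conv_tilde_uminus[OF assms(1,2), of "q - p"] by simp
  qed
  also have "\<dots> = - (\<Sum>q\<in>P. \<Sum>p\<in>P. ?I q p)"
    by (simp add: sum_negf)
  also have "\<dots> = - (\<Sum>(p, q)\<in>P \<times> P. ?I p q)"
    by (simp add: sum.cartesian_product)
  finally show ?thesis by (simp add: case_prod_beta)
qed

lemma
  assumes c: "continuous_on UNIV f" and sp: "has_compact_support f" and P: "finite P"
  defines "\<omega> \<equiv> density lborel (\<lambda>x. ennreal (Re (diffraction_density P x)))"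
  shows integrable_sq_inv_fourier_diffraction: "integrable \<omega> (\<lambda>x. (cmod (inv_fourier f x))\<^sup>2)"
    and integral_sq_inv_fourier_diffraction:
      "(\<integral>x. (cmod (inv_fourier f x))\<^sup>2 \<partial>\<omega>) = Re (\<Sum>(p, q)\<in>P \<times> P. conv_tilde f (p - q)) / real (card P)"
proof -
  let ?h = "\<lambda>x. Re (diffraction_density P x)" and ?N = "real (card P)"
  define \<Phi> where "\<Phi> x = (cmod (inv_fourier f x))\<^sup>2" for x
  have \<Phi>c: "continuous_on UNIV \<Phi>"
    unfolding \<Phi>_def by (intro continuous_intros continuous_on_inv_fourier[OF c sp])
  have \<Phi>m: "\<Phi> \<in> borel_measurable lborel" by (rule borel_measurable_continuous_on_lborel[OF \<Phi>c])
  have [measurable]: "?h \<in> borel_measurable lborel"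
    by (rule borel_measurable_continuous_on_lborel[OF continuous_on_Re_diffraction_density])
  have h0: "?h x \<ge> 0" for x
    by (rule Re_diffraction_density_nonneg[OF P])
  have hi: "integrable lborel (\<lambda>x. ?h x *\<^sub>R \<Phi> x)"
  proof (rule Bochner_Integration.integrable_bound[where f="\<lambda>x. ?N * \<Phi> x"])
    show "integrable lborel (\<lambda>x. ?N * \<Phi> x)"
      using integrable_sq_inv_fourier[OF c sp] unfolding \<Phi>_def by simp
    show "(\<lambda>x. ?h x *\<^sub>R \<Phi> x) \<in> borel_measurable lborel"
      by (intro borel_measurable_continuous_on_lborel continuous_intros continuous_on_Re_diffraction_density \<Phi>c)
    show "AE x in lborel. norm (?h x *\<^sub>R \<Phi> x) \<le> norm (?N * \<Phi> x)"
      using h0 Re_diffraction_density_le_card[OF P]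
      by (intro AE_I2) (simp add: \<Phi>_def abs_mult mult_right_mono)
  qed
  show "integrable \<omega> (\<lambda>x. (cmod (inv_fourier f x))\<^sup>2)"
    unfolding \<omega>_def \<Phi>_def[symmetric] using hi \<Phi>m h0 by (subst integrable_density) auto
  have "(\<integral>x. \<Phi> x \<partial>\<omega>) = (\<integral>x. ?h x *\<^sub>R \<Phi> x \<partial>lborel)"
    unfolding \<omega>_def using \<Phi>m h0 by (subst integral_density) auto
  also have "\<dots> = (\<integral>x. (1 / ?N) * (\<Sum>(p, q)\<in>P \<times> P. \<Phi> x * Re (e2pi ((p - q) * x))) \<partial>lborel)"
    unfolding Re_diffraction_density_sum
    by (intro Bochner_Integration.integral_cong refl) (simp add: sum_distrib_left sum_distrib_right case_prod_beta mult_ac)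
  also have "\<dots> = (1 / ?N) * (\<Sum>(p, q)\<in>P \<times> P. \<integral>x. \<Phi> x * Re (e2pi ((p - q) * x)) \<partial>lborel)"
  proof -
    have "(\<integral>x. (\<Sum>z\<in>P \<times> P. \<Phi> x * Re (e2pi ((fst z - snd z) * x))) \<partial>lborel)
        = (\<Sum>z\<in>P \<times> P. \<integral>x. \<Phi> x * Re (e2pi ((fst z - snd z) * x)) \<partial>lborel)"
      unfolding \<Phi>_def by (rule Bochner_Integration.integral_sum) (rule Re_conv_tilde(1)[OF c sp])
    then show ?thesis by (simp add: case_prod_beta)
  qed
  also have "\<dots> = Re (\<Sum>(p, q)\<in>P \<times> P. conv_tilde f (p - q)) / ?N"
    unfolding Re_sum \<Phi>_def case_prod_beta Re_conv_tilde(2)[OF c sp] by simp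
  finally show "(\<integral>x. (cmod (inv_fourier f x))\<^sup>2 \<partial>\<omega>) = Re (\<Sum>(p, q)\<in>P \<times> P. conv_tilde f (p - q)) / ?N"
    unfolding \<Phi>_def .
qed

theorem is_fourier_transform_gammaF:
  assumes P: "finite P"
  shows "is_fourier_transform (gammaF P) (density lborel (\<lambda>x. ennreal (Re (diffraction_density P x))))"
  unfolding is_fourier_transform_def
proof (intro conjI allI impI)
  show "radon_measure (density lborel (\<lambda>x. ennreal (Re (diffraction_density P x))))"
    using borel_measurable_continuous_on_lborel[OF continuous_on_Re_diffraction_density]
      Re_diffraction_density_le_card[OF P]
    by (rule radon_measure_density_bounded)
  fix f :: "real \<Rightarrow> complex"
  assume "continuous_on UNIV f \<and> has_compact_support f"
  then have c: "continuous_on UNIV f" and sp: "has_compact_support f" by auto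
  show "integrable (density lborel (\<lambda>x. ennreal (Re (diffraction_density P x)))) (\<lambda>x. (cmod (inv_fourier f x))\<^sup>2)"
    by (rule integrable_sq_inv_fourier_diffraction[OF c sp P])
  have gm: "conv_tilde f \<in> borel_measurable borel"
    by (rule borel_measurable_continuous_onI[OF continuous_on_conv_tilde[OF c sp]])
  show "integrable (gammaF P) (conv_tilde f)" by (rule integrable_gammaF[OF P gm])
  let ?S = "\<Sum>(p, q)\<in>P \<times> P. conv_tilde f (p - q)"
  have "?S = complex_of_real (Re ?S)"
    using Im_sum_conv_tilde_differences[OF c sp P] by (simp add: complex_eq_iff)
  then obtain r where r: "?S = complex_of_real r" by blast
  show "(\<integral>x. conv_tilde f x \<partial>gammaF P)
      = complex_of_real (\<integral>x. (cmod (inv_fourier f x))\<^sup>2 \<partial>density lborel (\<lambda>x. ennreal (Re (diffraction_density P x))))"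
    unfolding integral_gammaF[OF P gm] integral_sq_inv_fourier_diffraction[OF c sp P] r
    by (simp add: scaleR_conv_of_real)
qed

section \<open>Tent test functions and vague limits\<close>

definition tent :: "real \<Rightarrow> real \<Rightarrow> real" where
  "tent c x = max 0 (1 - \<bar>x\<bar> / c)"

definition tent_autocorr :: "real \<Rightarrow> real \<Rightarrow> real" where
  "tent_autocorr c y = (\<integral>t. tent c t * tent c (t - y) \<partial>lborel)"

lemma tent_nonneg: "tent c x \<ge> 0"
  unfolding tent_def by simp

lemma tent_le_1: "c > 0 \<Longrightarrow> tent c x \<le> 1"
  unfolding tent_def by simp

lemma tent_0 [simp]: "tent c 0 = 1"
  unfolding tent_def by simp

lemma tent_eq_0: "c > 0 \<Longrightarrow> \<bar>x\<bar> \<ge> c \<Longrightarrow> tent c x = 0"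
  unfolding tent_def by (simp add: field_simps)

lemma continuous_on_tent: "continuous_on UNIV (tent c)"
  unfolding tent_def[abs_def] divide_inverse by (intro continuous_intros)

lemma has_compact_support_tent: "c > 0 \<Longrightarrow> has_compact_support (tent c)"
  by (rule has_compact_supportI[of _ c]) (use tent_eq_0 in force)

lemma continuous_on_of_real_tent: "continuous_on UNIV (\<lambda>t. complex_of_real (tent c t))"
  by (intro continuous_intros continuous_on_compose2[OF continuous_on_tent]) auto

lemma has_compact_support_of_real_tent: "c > 0 \<Longrightarrow> has_compact_support (\<lambda>t. complex_of_real (tent c t))"
  using has_compact_support_tent unfolding has_compact_support_iff_bounded by simp

lemma conv_tilde_tent:
  "conv_tilde (\<lambda>t. complex_of_real (tent c t)) = (\<lambda>y. complex_of_real (tent_autocorr c y))"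
  unfolding conv_tilde_def tent_autocorr_def by (simp flip: integral_complex_of_real)

lemma
  assumes "c > 0"
  shows continuous_on_tent_autocorr: "continuous_on UNIV (tent_autocorr c)"
    and has_compact_support_tent_autocorr: "has_compact_support (tent_autocorr c)"
    and plancherel_tent_autocorr:
      "(\<integral>x. (cmod (inv_fourier (\<lambda>t. complex_of_real (tent c t)) x))\<^sup>2 \<partial>lborel) = tent_autocorr c 0"
proof -
  let ?f = "\<lambda>t. complex_of_real (tent c t)"
  note cont = continuous_on_of_real_tent[of c] and supp = has_compact_support_of_real_tent[OF assms]
  have "continuous_on UNIV (\<lambda>y. Re (conv_tilde ?f y))"
    by (intro continuous_intros continuous_on_conv_tilde cont supp)
  then show "continuous_on UNIV (tent_autocorr c)"
    unfolding conv_tilde_tent by simp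
  show "has_compact_support (tent_autocorr c)"
    using has_compact_support_conv_tilde[OF supp]
    unfolding conv_tilde_tent has_compact_support_iff_bounded by simp
  show "(\<integral>x. (cmod (inv_fourier ?f x))\<^sup>2 \<partial>lborel) = tent_autocorr c 0"
    using plancherel_conv_tilde[OF cont supp] unfolding conv_tilde_tent by simp
qed

lemma tent_autocorr_nonneg: "tent_autocorr c y \<ge> 0"
  unfolding tent_autocorr_def by (intro integral_nonneg_AE AE_I2 mult_nonneg_nonneg tent_nonneg)

lemma tent_autocorr_pos:
  assumes a: "0 < a" "a < c"
  shows "tent_autocorr c a > 0"
proof -
  have c: "c > 0" using a by simp
  have lower: "1 - a / c \<le> tent c x" if "\<bar>x\<bar> \<le> a" for x
  proof -
    have "\<bar>x\<bar> / c \<le> a / c" using that c by (simp add: divide_right_mono)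
    then show ?thesis unfolding tent_def by (simp add: le_max_iff_disj)
  qed
  have "(\<integral>t. indicator {0..a} t * (1 - a / c)\<^sup>2 \<partial>lborel) \<le> tent_autocorr c a"
    unfolding tent_autocorr_def
  proof (rule integral_mono)
    show "integrable lborel (\<lambda>t. indicator {0..a} t * (1 - a / c)\<^sup>2)"
      by (intro integrable_mult_left integrable_real_indicator) (auto simp: emeasure_lborel_Icc_eq)
    have "continuous_on UNIV (\<lambda>t. tent c t * tent c (t - a))"
      by (intro continuous_intros continuous_on_compose2[OF continuous_on_tent]) auto
    moreover have "has_compact_support (\<lambda>t. tent c t * tent c (t - a))"
      by (rule has_compact_supportI[of _ c]) (use tent_eq_0[OF c] in force)
    ultimately show "integrable lborel (\<lambda>t. tent c t * tent c (t - a))"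
      by (rule integrable_lborel_compact_support)
    fix t
    show "indicator {0..a} t * (1 - a / c)\<^sup>2 \<le> tent c t * tent c (t - a)"
    proof (cases "t \<in> {0..a}")
      case True
      then have "1 - a / c \<le> tent c t" "1 - a / c \<le> tent c (t - a)"
        by (auto intro: lower)
      moreover have "0 \<le> 1 - a / c" using a by simp
      ultimately have "(1 - a / c) * (1 - a / c) \<le> tent c t * tent c (t - a)"
        by (intro mult_mono) (auto simp: tent_nonneg)
      then show ?thesis using True by (simp add: power2_eq_square)
    qed (simp add: tent_nonneg)
  qed
  moreover have "(\<integral>t. indicator {0..a} t * (1 - a / c)\<^sup>2 \<partial>lborel) = a * (1 - a / c)\<^sup>2"
    using a by simp
  moreover have "a * (1 - a / c)\<^sup>2 > 0" using a by simp
  ultimately show ?thesis by linarith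
qed

lemma fourier_transform_lborel_integral_tent_autocorr:
  assumes FT: "is_fourier_transform \<gamma> lborel" and c: "c > 0"
  shows "integral\<^sup>L \<gamma> (tent_autocorr c) = tent_autocorr c 0"
proof -
  let ?f = "\<lambda>t. complex_of_real (tent c t)"
  have "(\<integral>x. conv_tilde ?f x \<partial>\<gamma>) = complex_of_real (\<integral>x. (cmod (inv_fourier ?f x))\<^sup>2 \<partial>lborel)"
    using FT continuous_on_of_real_tent has_compact_support_of_real_tent[OF c]
    unfolding is_fourier_transform_def by blast
  then show ?thesis
    unfolding conv_tilde_tent plancherel_tent_autocorr[OF c] by simp
qed

lemma vague_lim_const: "radon_measure \<mu> \<Longrightarrow> vague_lim (\<lambda>n. \<mu>) \<mu>"
  unfolding vague_lim_def by simp

lemma count_autocorr_finite: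
  assumes X: "finite X"
  shows "count_autocorr X (\<lambda>n. {- real n..real n}) (gammaF X)"
  unfolding count_autocorr_def vague_lim_def
proof (intro conjI allI impI radon_measure_gammaF[OF X] tendsto_eventually)
  obtain B where B: "\<forall>x\<in>X. norm x \<le> B" using finite_imp_bounded[OF X] bounded_iff by blast
  have "\<forall>\<^sub>F n in sequentially. B \<le> real n"
    by (rule eventually_sequentiallyI[of "nat \<lceil>B\<rceil>"]) linarith
  then show "\<forall>\<^sub>F n in sequentially. integral\<^sup>L (gammaF (X \<inter> {- real n..real n})) f = integral\<^sup>L (gammaF X) f" for f :: "real \<Rightarrow> real"
  proof eventually_elim
    case (elim n)
    then have "X \<inter> {- real n..real n} = X" using B by (force simp: abs_le_iff)
    then show ?case by simp
  qed
qed

theorem vague_lim_gammaF_not_fourier_transform_lborel: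
  assumes lim: "vague_lim (\<lambda>n. gammaF (F n)) \<gamma>" and fin: "\<And>n. finite (F n)"
    and mass: "(\<lambda>n. measure (gammaF (F n)) {a}) \<longlonglongrightarrow> m" and m: "m > 0" and a: "a > 0"
  shows "\<not> is_fourier_transform \<gamma> lborel"
proof
  assume FT: "is_fourier_transform \<gamma> lborel"
  define G where "G = tent_autocorr (a + 1)"
  have c: "a + 1 > 0" using a by simp
  have G_lim: "(\<lambda>n. integral\<^sup>L (gammaF (F n)) G) \<longlonglongrightarrow> integral\<^sup>L \<gamma> G"
    using lim continuous_on_tent_autocorr[OF c] has_compact_support_tent_autocorr[OF c]
    unfolding vague_lim_def G_def by blast
  have G_meas: "G \<in> borel_measurable borel"
    unfolding G_def by (rule borel_measurable_continuous_onI[OF continuous_on_tent_autocorr[OF c]])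
  have "\<forall>\<^sub>F n in sequentially. G 0 + measure (gammaF (F n)) {a} * G a \<le> integral\<^sup>L (gammaF (F n)) G"
    using order_tendstoD(1)[OF mass m]
  proof eventually_elim
    case (elim n)
    then have "F n \<noteq> {}" by (auto simp: measure_gammaF_singleton[OF fin])
    then show ?case
      using integral_gammaF_ge_point_mass[OF fin _ _ G_meas] a tent_autocorr_nonneg unfolding G_def by auto
  qed
  moreover have "(\<lambda>n. G 0 + measure (gammaF (F n)) {a} * G a) \<longlonglongrightarrow> G 0 + m * G a"
    by (intro tendsto_intros mass)
  ultimately have "G 0 + m * G a \<le> integral\<^sup>L \<gamma> G"
    using tendsto_le[OF trivial_limit_sequentially G_lim] by blast
  moreover have "integral\<^sup>L \<gamma> G = G 0"
    unfolding G_def by (rule fourier_transform_lborel_integral_tent_autocorr[OF FT c])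
  moreover have "G a > 0"
    unfolding G_def using a by (intro tent_autocorr_pos) auto
  ultimately show False using mult_pos_pos[OF m] by fastforce
qed

lemma continuous_on_tent_shift: "continuous_on UNIV (\<lambda>x. tent c (x - a))"
  by (intro continuous_on_compose2[OF continuous_on_tent] continuous_intros) auto

lemma has_compact_support_tent_shift:
  assumes "c > 0"
  shows "has_compact_support (\<lambda>x. tent c (x - a))"
proof (rule has_compact_supportI)
  fix x assume "tent c (x - a) \<noteq> 0"
  then have "\<bar>x - a\<bar> < c" using tent_eq_0[OF assms] by force
  then show "\<bar>x\<bar> \<le> \<bar>a\<bar> + c" by arith
qed

lemma tent_shrink_tendsto: "(\<lambda>k. tent (1 / real (Suc k)) (x - a)) \<longlonglongrightarrow> indicator {a} x"
proof (cases "x = a")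
  case False
  then obtain N :: nat where N: "inverse (real (Suc N)) < \<bar>x - a\<bar>"
    using reals_Archimedean[of "\<bar>x - a\<bar>"] by auto
  have "tent (1 / real (Suc k)) (x - a) = 0" if "N \<le> k" for k
  proof -
    have "1 / real (Suc k) \<le> inverse (real (Suc N))"
      using that by (simp add: inverse_eq_divide frac_le)
    then show ?thesis using N by (intro tent_eq_0) auto
  qed
  then have "(\<lambda>k. tent (1 / real (Suc k)) (x - a)) \<longlonglongrightarrow> 0"
    by (intro tendsto_eventually) (auto simp: eventually_sequentially)
  then show ?thesis using False by simp
qed simp

lemma integral_gammaF_tent_shift_Ints:
  assumes F: "finite F" "F \<subseteq> \<int>" and a: "a \<in> \<int>" and c: "0 < c" "c \<le> 1"
  shows "integral\<^sup>L (gammaF F) (\<lambda>x. tent c (x - a)) = measure (gammaF F) {a}"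
proof -
  have "tent c (x - y - a) = indicator {a} (x - y)" if "x \<in> F" "y \<in> F" for x y
  proof (cases "x - y = a")
    case False
    have "x - y - a \<in> \<int>" using that F(2) a by (intro Ints_diff) auto
    then have "1 \<le> \<bar>x - y - a\<bar>" using False by (intro Ints_nonzero_abs_ge1) auto
    then show ?thesis using False c by (simp add: tent_eq_0)
  qed simp
  then have "(\<Sum>(x, y)\<in>F \<times> F. tent c (x - y - a)) = (\<Sum>(x, y)\<in>F \<times> F. indicator {a} (x - y))"
    by (intro sum.cong refl) auto
  then show ?thesis
    using integral_gammaF[OF F(1) borel_measurable_continuous_onI[OF continuous_on_tent_shift]]
      integral_gammaF[OF F(1), of "indicator {a} :: real \<Rightarrow> real"] by simp
qed

lemma measure_singleton_vague_lim_gammaF: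
  assumes lim: "vague_lim (\<lambda>n. gammaF (F n)) \<gamma>" and fin: "\<And>n. finite (F n)"
    and Ints: "\<And>n. F n \<subseteq> \<int>" and a: "a \<in> \<int>"
    and mass: "(\<lambda>n. measure (gammaF (F n)) {a}) \<longlonglongrightarrow> m"
  shows "measure \<gamma> {a} = m"
proof -
  have rad: "radon_measure \<gamma>" using lim unfolding vague_lim_def by blast
  then have sets_\<gamma>: "sets \<gamma> = sets borel" unfolding radon_measure_def by blast
  define \<phi> where "\<phi> k x = tent (1 / real (Suc k)) (x - a)" for k x
  have \<epsilon>: "1 / real (Suc k) > 0" "1 / real (Suc k) \<le> 1" for k by auto
  have "(\<lambda>n. integral\<^sup>L (gammaF (F n)) (\<phi> k)) \<longlonglongrightarrow> integral\<^sup>L \<gamma> (\<phi> k)" for k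
    using lim continuous_on_tent_shift has_compact_support_tent_shift[OF \<epsilon>(1)]
    unfolding vague_lim_def \<phi>_def by blast
  then have \<phi>_integral: "integral\<^sup>L \<gamma> (\<phi> k) = m" for k
    unfolding \<phi>_def integral_gammaF_tent_shift_Ints[OF fin Ints a \<epsilon>] using mass by (rule LIMSEQ_unique)
  have "(\<lambda>k. integral\<^sup>L \<gamma> (\<phi> k)) \<longlonglongrightarrow> integral\<^sup>L \<gamma> (indicator {a} :: real \<Rightarrow> real)"
  proof (rule integral_dominated_convergence[where w="indicator {a - 1..a + 1}"])
    show "integrable \<gamma> (indicator {a - 1..a + 1} :: real \<Rightarrow> real)"
      using rad sets_\<gamma> unfolding radon_measure_def by (intro integrable_real_indicator) auto
    show "AE x in \<gamma>. (\<lambda>k. \<phi> k x) \<longlonglongrightarrow> indicator {a} x"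
      unfolding \<phi>_def by (intro AE_I2 tent_shrink_tendsto)
    show "AE x in \<gamma>. norm (\<phi> k x) \<le> indicator {a - 1..a + 1} x" for k
    proof (rule AE_I2)
      fix x
      have "\<phi> k x = 0" if "1 \<le> \<bar>x - a\<bar>"
        unfolding \<phi>_def using \<epsilon>(2)[of k] that by (intro tent_eq_0 \<epsilon>(1)) linarith
      then show "norm (\<phi> k x) \<le> indicator {a - 1..a + 1} x"
        using tent_le_1[OF \<epsilon>(1)] tent_nonneg by (auto simp: indicator_def \<phi>_def abs_le_iff)
    qed
    show "indicator {a} \<in> borel_measurable \<gamma>"
      unfolding measurable_cong_sets[OF sets_\<gamma> refl] by simp
    show "\<phi> k \<in> borel_measurable \<gamma>" for k
      unfolding measurable_cong_sets[OF sets_\<gamma> refl] \<phi>_def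
      by (rule borel_measurable_continuous_onI[OF continuous_on_tent_shift])
  qed
  then have "(\<lambda>k. m) \<longlonglongrightarrow> measure \<gamma> {a}"
    using \<phi>_integral sets_eq_imp_space_eq[OF sets_\<gamma>] by simp
  then show ?thesis
    by (rule LIMSEQ_unique[OF tendsto_const, symmetric])
qed

lemma tendsto_half_bounded_gap:
  fixes N c :: "nat \<Rightarrow> real"
  assumes c: "filterlim c at_top sequentially" and gap: "\<And>n. \<bar>2 * N n - c n\<bar> \<le> K"
  shows "(\<lambda>n. N n / c n) \<longlonglongrightarrow> 1 / 2"
proof -
  have "(\<lambda>n. N n / c n - 1 / 2) \<longlonglongrightarrow> 0"
  proof (rule Lim_null_comparison)
    show "\<forall>\<^sub>F n in sequentially. norm (N n / c n - 1 / 2) \<le> K / 2 * inverse (c n)"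
      using c[unfolded filterlim_at_top_dense, rule_format, of 0]
    proof eventually_elim
      case (elim n)
      then have "N n / c n - 1 / 2 = (2 * N n - c n) / (2 * c n)" by (simp add: field_simps)
      then show ?case using elim gap[of n] by (simp add: abs_divide divide_right_mono field_simps)
    qed
    show "(\<lambda>n. K / 2 * inverse (c n)) \<longlonglongrightarrow> 0"
      by (intro tendsto_mult_right_zero tendsto_inverse_0_at_top c)
  qed
  then show ?thesis by (simp add: LIM_zero_iff)
qed

section \<open>Prime pairs\<close>

lemma signed_primesE:
  assumes "x \<in> signed_primes"
  obtains z :: int where "x = of_int z" "prime (nat \<bar>z\<bar>)"
proof -
  from assms obtain p :: nat where p: "prime p" "x = real p \<or> x = - real p"
    unfolding signed_primes_def by blast
  then show ?thesis
    using that[of "int p"] that[of "- int p"] by auto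
qed

lemma signed_primes_subset_Ints: "signed_primes \<subseteq> \<int>"
  by (metis signed_primesE Ints_of_int subsetI)

lemma prime_nat_abs_if_signed_prime: "of_int z \<in> signed_primes \<Longrightarrow> prime (nat \<bar>z\<bar>)"
  by (metis signed_primesE of_int_eq_iff)

lemma signed_prime_dvd_3:
  assumes "of_int z \<in> signed_primes" "(3::int) dvd z"
  shows "\<bar>z\<bar> = 3"
proof -
  obtain k where k: "z = 3 * k" using assms(2) by (elim dvdE)
  have "prime (3 * nat \<bar>k\<bar>)"
    using prime_nat_abs_if_signed_prime[OF assms(1)] unfolding k by (simp add: abs_mult nat_mult_distrib)
  then have "nat \<bar>k\<bar> = 1" using prime_product[of 3 "nat \<bar>k\<bar>"] by simp
  then show ?thesis unfolding k by (simp add: abs_mult)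
qed

lemma finite_signed_prime_triples:
  assumes "\<not> 3 dvd d"
  shows "finite {x. x - real d \<in> signed_primes \<and> x \<in> signed_primes \<and> x + real d \<in> signed_primes}"
proof (rule finite_subset)
  show "{x. x - real d \<in> signed_primes \<and> x \<in> signed_primes \<and> x + real d \<in> signed_primes}
     \<subseteq> {3 + real d, -3 + real d, 3, -3, 3 - real d, -3 - real d}"
  proof
    fix x assume x: "x \<in> {x. x - real d \<in> signed_primes \<and> x \<in> signed_primes \<and> x + real d \<in> signed_primes}"
    then obtain z :: int where z: "x = of_int z" by (blast elim: signed_primesE)
    have "of_int (z - int d) \<in> signed_primes" "of_int z \<in> signed_primes" "of_int (z + int d) \<in> signed_primes"
      using x z by auto
    moreover have "(3::int) dvd (z - int d) \<or> 3 dvd z \<or> 3 dvd (z + int d)"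
      using assms by presburger
    ultimately have "\<bar>z - int d\<bar> = 3 \<or> \<bar>z\<bar> = 3 \<or> \<bar>z + int d\<bar> = 3"
      using signed_prime_dvd_3 by blast
    then have "z = 3 + int d \<or> z = -3 + int d \<or> z = 3 \<or> z = -3 \<or> z = 3 - int d \<or> z = -3 - int d"
      by linarith
    then show "x \<in> {3 + real d, -3 + real d, 3, -3, 3 - real d, -3 - real d}"
      unfolding z by (elim disjE) simp_all
  qed
qed simp

lemma prime_pairs_subset_signed_primes: "prime_pairs d \<subseteq> signed_primes"
  unfolding prime_pairs_def by auto

lemma prime_pairs_subset_Ints: "prime_pairs d \<subseteq> \<int>"
  using prime_pairs_subset_signed_primes signed_primes_subset_Ints by blast

lemma prime_pairs_partner:
  assumes "x \<in> prime_pairs d"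
  shows "x - real d \<in> prime_pairs d \<or> x + real d \<in> prime_pairs d"
proof -
  from assms obtain p where p: "p \<in> signed_primes" "p + real d \<in> signed_primes" "x = p \<or> x = p + real d"
    unfolding prime_pairs_def by blast
  then have "p \<in> prime_pairs d" "p + real d \<in> prime_pairs d"
    unfolding prime_pairs_def by blast+
  then show ?thesis using p(3) by auto
qed

lemma prime_pairs_centre_iff:
  "(\<exists>x \<in> prime_pairs d. x - real d \<in> prime_pairs d \<and> x + real d \<in> prime_pairs d) \<longleftrightarrow>
   (\<exists>p. p \<in> signed_primes \<and> p + real d \<in> signed_primes \<and> p + 2 * real d \<in> signed_primes)"
proof
  assume "\<exists>x \<in> prime_pairs d. x - real d \<in> prime_pairs d \<and> x + real d \<in> prime_pairs d"
  then obtain x where "x - real d \<in> signed_primes" "x \<in> signed_primes" "x + real d \<in> signed_primes"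
    using prime_pairs_subset_signed_primes by blast
  then show "\<exists>p. p \<in> signed_primes \<and> p + real d \<in> signed_primes \<and> p + 2 * real d \<in> signed_primes"
    by (intro exI[of _ "x - real d"]) (simp add: algebra_simps)
next
  assume "\<exists>p. p \<in> signed_primes \<and> p + real d \<in> signed_primes \<and> p + 2 * real d \<in> signed_primes"
  then obtain p where "p \<in> signed_primes" "p + real d \<in> signed_primes" "p + real d + real d \<in> signed_primes"
    by (auto simp: algebra_simps)
  then have "p \<in> prime_pairs d" "p + real d \<in> prime_pairs d" "p + real d + real d \<in> prime_pairs d"
    unfolding prime_pairs_def by blast+
  then show "\<exists>x \<in> prime_pairs d. x - real d \<in> prime_pairs d \<and> x + real d \<in> prime_pairs d"
    by (intro bexI[of _ "p + real d"]) auto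
qed

lemma measure_gammaF_prime_pairs:
  assumes P: "finite (prime_pairs d)" "prime_pairs d \<noteq> {}"
  defines "C \<equiv> {x \<in> prime_pairs d. x - real d \<in> prime_pairs d \<and> x + real d \<in> prime_pairs d}"
  shows "measure (gammaF (prime_pairs d)) {real d} = 1 / 2 + real (card C) / (2 * real (card (prime_pairs d)))"
proof -
  let ?P = "prime_pairs d"
  have N: "real (card ?P) > 0" using P by (simp add: card_gt_0_iff)
  have lonely: "{x \<in> ?P. x - real d \<notin> ?P \<and> x + real d \<notin> ?P} = {}"
    using prime_pairs_partner by blast
  have "2 * diff_count ?P (real d) = card ?P + card C"
    using two_diff_count[OF P(1), of "real d"] unfolding lonely C_def by simp
  then have "2 * real (diff_count ?P (real d)) = real (card ?P) + real (card C)"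
    by (metis of_nat_add of_nat_mult of_nat_numeral)
  then show ?thesis
    unfolding measure_gammaF_singleton[OF P(1)] using N by (simp add: field_simps)
qed

lemma finite_Ints_inter_atLeastAtMost:
  fixes S :: "real set"
  assumes "S \<subseteq> \<int>"
  shows "finite (S \<inter> {- R..R})"
proof (rule finite_subset)
  show "S \<inter> {- R..R} \<subseteq> real_of_int ` {\<lfloor>- R\<rfloor>..\<lceil>R\<rceil>}"
  proof
    fix x assume x: "x \<in> S \<inter> {- R..R}"
    then obtain z where z: "x = of_int z" using assms Ints_cases by blast
    have "\<lfloor>- R\<rfloor> \<le> z" "z \<le> \<lceil>R\<rceil>" using x unfolding z by (auto simp: floor_le_iff le_ceiling_iff)
    then show "x \<in> real_of_int ` {\<lfloor>- R\<rfloor>..\<lceil>R\<rceil>}" unfolding z by auto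
  qed
qed simp

lemma card_Ints_inter_atLeastAtMost_at_top:
  fixes S :: "real set"
  assumes S: "S \<subseteq> \<int>" "infinite S"
  shows "filterlim (\<lambda>R. real (card (S \<inter> {- R..R}))) at_top at_top"
  unfolding filterlim_at_top
proof
  fix Z :: real
  obtain T where T: "finite T" "card T = nat \<lceil>Z\<rceil>" "T \<subseteq> S"
    using infinite_arbitrarily_large[OF S(2)] by blast
  obtain B where B: "\<forall>x\<in>T. norm x \<le> B" using finite_imp_bounded[OF T(1)] bounded_iff by blast
  show "\<forall>\<^sub>F R in at_top. Z \<le> real (card (S \<inter> {- R..R}))"
    using eventually_ge_at_top[of B]
  proof eventually_elim
    case (elim R)
    then have "T \<subseteq> S \<inter> {- R..R}" using B T(3) by (force simp: abs_le_iff)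
    then have "card T \<le> card (S \<inter> {- R..R})"
      by (rule card_mono[OF finite_Ints_inter_atLeastAtMost[OF S(1)]])
    then show ?case using T(2) by linarith
  qed
qed

lemma card_Ints_near_boundary:
  fixes S :: "real set"
  assumes "S \<subseteq> \<int>"
  shows "card {x \<in> S \<inter> {- real R..real R}. real R - real d < \<bar>x\<bar>} \<le> 2 * d"
proof -
  let ?E = "{x \<in> S \<inter> {- real R..real R}. real R - real d < \<bar>x\<bar>}"
  let ?I = "{int R - int d + 1..int R} \<union> {- int R..- int R + int d - 1}"
  have "?E \<subseteq> real_of_int ` ?I"
  proof
    fix x assume x: "x \<in> ?E"
    then obtain z where z: "x = of_int z" using assms Ints_cases by blast
    have "real R - real d < \<bar>real_of_int z\<bar>" "\<bar>real_of_int z\<bar> \<le> real R" using x unfolding z by auto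
    then have "int R - int d < \<bar>z\<bar>" "\<bar>z\<bar> \<le> int R" by linarith+
    then have "z \<in> ?I" by auto
    then show "x \<in> real_of_int ` ?I" unfolding z by blast
  qed
  then have "card ?E \<le> card (real_of_int ` ?I)" by (intro card_mono) auto
  also have "\<dots> \<le> card ?I" by (rule card_image_le) simp
  also have "\<dots> \<le> card {int R - int d + 1..int R} + card {- int R..- int R + int d - 1}" by (rule card_Un_le)
  finally show ?thesis by simp
qed

lemma measure_gammaF_prime_pairs_truncation_tendsto:
  assumes inf: "infinite (prime_pairs d)" and d3: "\<not> 3 dvd d" and r: "strict_mono r"
  shows "(\<lambda>n. measure (gammaF (prime_pairs d \<inter> {- real (r n)..real (r n)})) {real d}) \<longlonglongrightarrow> 1 / 2"
proof -
  let ?P = "prime_pairs d"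
  define F where "F n = ?P \<inter> {- real (r n)..real (r n)}" for n
  define T where "T = {x. x - real d \<in> signed_primes \<and> x \<in> signed_primes \<and> x + real d \<in> signed_primes}"
  have fin: "finite (F n)" for n
    unfolding F_def by (rule finite_Ints_inter_atLeastAtMost[OF prime_pairs_subset_Ints])
  have gap: "\<bar>2 * real (diff_count (F n) (real d)) - real (card (F n))\<bar> \<le> real (2 * d + card T)" for n
  proof -
    let ?lonely = "{x \<in> F n. x - real d \<notin> F n \<and> x + real d \<notin> F n}"
    let ?centres = "{x \<in> F n. x - real d \<in> F n \<and> x + real d \<in> F n}"
    let ?boundary = "{x \<in> ?P \<inter> {- real (r n)..real (r n)}. real (r n) - real d < \<bar>x\<bar>}"
    have "?lonely \<subseteq> ?boundary"
      using prime_pairs_partner unfolding F_def by fastforce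
    moreover have "finite ?boundary" using fin[of n] unfolding F_def by (rule finite_subset[rotated]) blast
    ultimately have "card ?lonely \<le> card ?boundary" using card_mono by blast
    then have "card ?lonely \<le> 2 * d"
      using card_Ints_near_boundary[OF prime_pairs_subset_Ints[of d], of "r n" d] by linarith
    moreover have "card ?centres \<le> card T"
      using prime_pairs_subset_signed_primes finite_signed_prime_triples[OF d3]
      unfolding F_def T_def by (intro card_mono) auto
    ultimately show ?thesis
      using two_diff_count[OF fin, of n "real d"] by linarith
  qed
  have "filterlim (\<lambda>n. real (card (F n))) at_top sequentially"
    unfolding F_def
    by (rule filterlim_compose[OF card_Ints_inter_atLeastAtMost_at_top[OF prime_pairs_subset_Ints inf]])
      (rule filterlim_compose[OF filterlim_real_sequentially filterlim_subseq[OF r]])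
  from tendsto_half_bounded_gap[OF this gap] show ?thesis
    unfolding F_def measure_gammaF_singleton[OF finite_Ints_inter_atLeastAtMost[OF prime_pairs_subset_Ints]] .
qed

lemma measure_dirac_singleton: "measure (dirac a) {b} = indicator {b} a"
proof -
  have "dirac a = return borel a"
    unfolding dirac_def return_def by simp
  then show ?thesis by (simp add: measure_return)
qed

theorem autocorrelation_finite_prime_pairs:
  assumes d: "d \<ge> 1" and P: "finite (prime_pairs d)" "prime_pairs d \<noteq> {}"
  defines "\<gamma> \<equiv> gammaF (prime_pairs d)"
    and "\<omega> \<equiv> density lborel (\<lambda>x. ennreal (Re (diffraction_density (prime_pairs d) x)))"
  shows "count_autocorr (prime_pairs d) (\<lambda>n. {- real n..real n}) \<gamma>"
    and "\<gamma> \<noteq> dirac 0"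
    and "Im (diffraction_density (prime_pairs d) x) = 0"
    and "is_fourier_transform \<gamma> \<omega>"
    and "\<omega> \<noteq> lborel"
    and "measure \<gamma> {real d} \<ge> 1 / 2"
    and "measure \<gamma> {real d} = 1 / 2 \<longleftrightarrow>
      \<not> (\<exists>p. p \<in> signed_primes \<and> p + real d \<in> signed_primes \<and> p + 2 * real d \<in> signed_primes)"
proof -
  let ?P = "prime_pairs d"
  let ?C = "{x \<in> ?P. x - real d \<in> ?P \<and> x + real d \<in> ?P}"
  have N: "real (card ?P) > 0" using P by (simp add: card_gt_0_iff)
  have mass: "measure \<gamma> {real d} = 1 / 2 + real (card ?C) / (2 * real (card ?P))"
    unfolding \<gamma>_def by (rule measure_gammaF_prime_pairs[OF P])
  show half: "measure \<gamma> {real d} \<ge> 1 / 2"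
    using mass N by simp
  have "measure \<gamma> {real d} = 1 / 2 \<longleftrightarrow> ?C = {}"
    using mass N P by simp
  then show "measure \<gamma> {real d} = 1 / 2 \<longleftrightarrow>
      \<not> (\<exists>p. p \<in> signed_primes \<and> p + real d \<in> signed_primes \<and> p + 2 * real d \<in> signed_primes)"
    using prime_pairs_centre_iff[of d] by blast
  show "count_autocorr ?P (\<lambda>n. {- real n..real n}) \<gamma>"
    unfolding \<gamma>_def by (rule count_autocorr_finite[OF P(1)])
  show "\<gamma> \<noteq> dirac 0"
    using half d by (auto simp: measure_dirac_singleton)
  show "Im (diffraction_density ?P x) = 0"
    by (rule Im_diffraction_density[OF P(1)])
  show FT: "is_fourier_transform \<gamma> \<omega>"
    unfolding \<gamma>_def \<omega>_def by (rule is_fourier_transform_gammaF[OF P(1)])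
  have "\<not> is_fourier_transform \<gamma> lborel"
    unfolding \<gamma>_def
    by (rule vague_lim_gammaF_not_fourier_transform_lborel[OF vague_lim_const[OF radon_measure_gammaF[OF P(1)]]
          P(1) tendsto_const, of "real d"]) (use half d in \<open>auto simp: \<gamma>_def\<close>)
  with FT show "\<omega> \<noteq> lborel" by auto
qed

theorem autocorrelation_infinite_prime_pairs:
  assumes inf: "infinite (prime_pairs d)" and d3: "\<not> 3 dvd d" and r: "strict_mono r"
    and \<gamma>: "count_autocorr (prime_pairs d) (\<lambda>n. {- real (r n)..real (r n)}) \<gamma>"
  shows "measure \<gamma> {real d} = 1 / 2" and "\<not> is_fourier_transform \<gamma> lborel"
proof -
  let ?F = "\<lambda>n. prime_pairs d \<inter> {- real (r n)..real (r n)}"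
  have lim: "vague_lim (\<lambda>n. gammaF (?F n)) \<gamma>"
    using \<gamma> unfolding count_autocorr_def .
  have fin: "finite (?F n)" for n
    by (rule finite_Ints_inter_atLeastAtMost[OF prime_pairs_subset_Ints])
  have mass: "(\<lambda>n. measure (gammaF (?F n)) {real d}) \<longlonglongrightarrow> 1 / 2"
    by (rule measure_gammaF_prime_pairs_truncation_tendsto[OF inf d3 r])
  show "measure \<gamma> {real d} = 1 / 2"
    by (rule measure_singleton_vague_lim_gammaF[OF lim fin _ _ mass])
      (use prime_pairs_subset_Ints in auto)
  have "d > 0" using d3 by (intro Nat.gr0I) auto
  then show "\<not> is_fourier_transform \<gamma> lborel"
    by (intro vague_lim_gammaF_not_fourier_transform_lborel[OF lim fin mass]) auto
qed

theorem proposition5p18: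
  fixes d :: nat
  assumes "d \<ge> 1"
  shows
   "(prime_pairs d \<noteq> {} \<and> finite (prime_pairs d) \<longrightarrow>
      (let P = prime_pairs d; \<gamma> = gammaF P;
           h = (\<lambda>x::real. (1 / of_nat (card P)) *
                 (\<Sum>(p, q) \<in> P \<times> P. exp (2 * pi * \<i> * complex_of_real ((p - q) * x))))
       in count_autocorr P (\<lambda>n. {- real n .. real n}) \<gamma> \<and>
          \<gamma> \<noteq> dirac 0 \<and>
          (\<forall>x. Im (h x) = 0) \<and>
          is_fourier_transform \<gamma> (density lborel (\<lambda>x. ennreal (Re (h x)))) \<and>
          density lborel (\<lambda>x. ennreal (Re (h x))) \<noteq> lborel \<and>
          measure \<gamma> {real d} \<ge> 1 / 2 \<and>
          (measure \<gamma> {real d} = 1 / 2 \<longleftrightarrow>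
             \<not> (\<exists>p. p \<in> signed_primes \<and> p + real d \<in> signed_primes \<and>
                    p + 2 * real d \<in> signed_primes))))
    \<and>
    (infinite (prime_pairs d) \<and> \<not> (3 dvd d) \<longrightarrow>
      (\<forall>r :: nat \<Rightarrow> nat. \<forall>\<gamma>. strict_mono r \<longrightarrow>
          count_autocorr (prime_pairs d) (\<lambda>n. {- real (r n) .. real (r n)}) \<gamma> \<longrightarrow>
          measure \<gamma> {real d} = 1 / 2 \<and> \<not> is_fourier_transform \<gamma> lborel))"
  unfolding Let_def diffraction_density_def[symmetric]
  by (intro conjI impI allI; elim conjE;
      rule autocorrelation_finite_prime_pairs[OF assms] autocorrelation_infinite_prime_pairs; assumption)

end
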